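(* Let $n\geq1$ be an integer, $R_1>R_2>0$, $\lambda>0$, and let $\Omega:=\{x\in\mathbb{R}^n\mid R_2<|x|<R_1\}$, where $|\cdot|$ is the Euclidean norm. Let $H(t):=\tfrac12\left(\tfrac12t^2-\lambda\right)^2$ for $t\in\mathbb{R}$ and $\theta(r):=r^{n-1}$. Let $f:[R_2,R_1]\to\mathbb{R}$ be continuous with $\int_{R_2}^{R_1}\theta f=0$, such that there is a unique $R_3\in(R_2,R_1)$ with $f(R_3)=0$ and $f(r)\neq0$ for $r\in[R_2,R_1]\setminus\{R_3\}$, and such that $\int_{R_2}^{R_1}|\theta f|<R_2^{n-1}(2\lambda/3)^{3/2}$. Let $$U:=\{u=\upsilon\circ|\cdot|\ :\ \upsilon\in C^1[R_2,R_1],\ \upsilon'(R_1)=\upsilon'(R_2)=0\}\subset C^1(\overline\Omega),$$ endowed with the norm $\|u\|:=\sup_{x\in\overline\Omega}|u(x)|+\sup_{x\in\overline\Omega}|\nabla u(x)|$, and define $I:U\to\mathbb{R}$, $I[u]:=\int_\Omega\big(H(|\nabla u(x)|)-f(|x|)u(x)\big)\,dx$. Let $F(r):=-\frac{1}{r^{n-1}}\int_{R_2}^r f(\rho)\rho^{n-1}\,d\rho$ for $r\in[R_2,R_1]$, and for $A\in\left(-(2\lambda/3)^{3/2},(2\lambda/3)^{3/2}\right)$ let $z_2(A)$ be the unique solution in $\left(-\sqrt{2\lambda/3},\sqrt{2\lambda/3}\right)$ of $z\left(\tfrac12z^2-\lambda\right)=A$. Then $I$ (on $U$) has no local minimizers,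 and $\overline u\in U$ is a local maximizer of $I$ on $U$ if and only if there exists $u_0\in\mathbb{R}$ such that $\overline u(x)=u_0+\int_{R_2}^{|x|}z_2(F(\rho))\,d\rho$ for every $x\in\overline\Omega$.
   Context: Here $\upsilon\circ|\cdot|$ denotes the radially symmetric function $x\mapsto\upsilon(|x|)$ on $\overline\Omega$. Under the hypotheses, $|F(r)|<(2\lambda/3)^{3/2}$ on $[R_2,R_1]$, so $z_2(F(\rho))$ is well defined. *)

theory Defs
  imports "HOL-Analysis.Analysis"
begin

definition annulus :: "real \<Rightarrow> real \<Rightarrow> (real^'n) set" where
  "annulus R2 R1 = {x. R2 < norm x \<and> norm x < R1}"

definition cl_annulus :: "real \<Rightarrow> real \<Rightarrow> (real^'n) set" where
  "cl_annulus R2 R1 = {x. R2 \<le> norm x \<and> norm x \<le> R1}"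

definition Hfun :: "real \<Rightarrow> real \<Rightarrow> real" where
  "Hfun lam t = (1/2) * ((1/2) * t^2 - lam)^2"

definition C1_on_with :: "real \<Rightarrow> real \<Rightarrow> (real \<Rightarrow> real) \<Rightarrow> (real \<Rightarrow> real) \<Rightarrow> bool" where
  "C1_on_with a b v v' \<longleftrightarrow> continuous_on {a..b} v' \<and>
     (\<forall>r\<in>{a..b}. (v has_real_derivative v' r) (at r within {a..b}))"

text \<open>The space U of radial C^1 functions with Neumann condition; functions are only
  considered on the closed annulus.\<close>
definition Uspace :: "real \<Rightarrow> real \<Rightarrow> ((real^'n) \<Rightarrow> real) set" where
  "Uspace R2 R1 = {u. \<exists>v v'. C1_on_with R2 R1 v v' \<and> v' R1 = 0 \<and> v' R2 = 0 \<and>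
      (\<forall>x\<in>cl_annulus R2 R1. u x = v (norm x))}"

definition grad :: "real \<Rightarrow> real \<Rightarrow> ((real^'n) \<Rightarrow> real) \<Rightarrow> real^'n \<Rightarrow> real^'n" where
  "grad R2 R1 u x = (THE g. (u has_derivative (\<lambda>h. g \<bullet> h)) (at x within cl_annulus R2 R1))"

definition normU :: "real \<Rightarrow> real \<Rightarrow> ((real^'n) \<Rightarrow> real) \<Rightarrow> real" where
  "normU R2 R1 u = (SUP x\<in>cl_annulus R2 R1. \<bar>u x\<bar>) + (SUP x\<in>cl_annulus R2 R1. norm (grad R2 R1 u x))"

definition Ifun :: "real \<Rightarrow> real \<Rightarrow> real \<Rightarrow> (real \<Rightarrow> real) \<Rightarrow> ((real^'n) \<Rightarrow> real) \<Rightarrow> real" where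
  "Ifun lam R2 R1 f u = integral (annulus R2 R1)
      (\<lambda>x. Hfun lam (norm (grad R2 R1 u x)) - f (norm x) * u x)"

definition local_min_U :: "real \<Rightarrow> real \<Rightarrow> real \<Rightarrow> (real \<Rightarrow> real) \<Rightarrow> ((real^'n) \<Rightarrow> real) \<Rightarrow> bool" where
  "local_min_U lam R2 R1 f u \<longleftrightarrow> u \<in> Uspace R2 R1 \<and> (\<exists>e>0. \<forall>w\<in>Uspace R2 R1.
      normU R2 R1 (\<lambda>x. w x - u x) < e \<longrightarrow> Ifun lam R2 R1 f u \<le> Ifun lam R2 R1 f w)"

definition local_max_U :: "real \<Rightarrow> real \<Rightarrow> real \<Rightarrow> (real \<Rightarrow> real) \<Rightarrow> ((real^'n) \<Rightarrow> real) \<Rightarrow> bool" where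
  "local_max_U lam R2 R1 f u \<longleftrightarrow> u \<in> Uspace R2 R1 \<and> (\<exists>e>0. \<forall>w\<in>Uspace R2 R1.
      normU R2 R1 (\<lambda>x. w x - u x) < e \<longrightarrow> Ifun lam R2 R1 f w \<le> Ifun lam R2 R1 f u)"

definition Ffun :: "nat \<Rightarrow> real \<Rightarrow> (real \<Rightarrow> real) \<Rightarrow> real \<Rightarrow> real" where
  "Ffun n R2 f r = - (1 / r ^ (n - 1)) * integral {R2..r} (\<lambda>\<rho>. f \<rho> * \<rho> ^ (n - 1))"

definition z2 :: "real \<Rightarrow> real \<Rightarrow> real" where
  "z2 lam A = (THE z. - sqrt (2*lam/3) < z \<and> z < sqrt (2*lam/3) \<and> z * ((1/2) * z^2 - lam) = A)"

end

theory Submission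
  imports Defs
begin

text \<open>For radial \<open>u = v(|x|)\<close>, polar coordinates and an integration by parts give
  \<open>I[u] = n \<omega>\<^sub>n \<integral>\<^sub>R\<^sub>2\<^sup>R\<^sup>1 (r\<^sup>n\<^sup>-\<^sup>1 H(v') + G v') dr\<close> with \<open>G(r) = \<integral>\<^sub>R\<^sub>2\<^sup>r \<rho>\<^sup>n\<^sup>-\<^sup>1 f = -r\<^sup>n\<^sup>-\<^sup>1 F(r)\<close>;
  the boundary term vanishes because \<open>G(R\<^sub>1) = 0\<close>. This is a functional of \<open>v'\<close> alone with a
  pointwise Lagrangian. At a local extremum the Euler--Lagrange equation \<open>H'(v') = F\<close> holds, and
  the Neumann condition together with \<open>|F| < (2\<lambda>/3)\<^sup>3\<^sup>/\<^sup>2\<close> forces \<open>v' = z\<^sub>2(F)\<close>, the branch on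
  which \<open>H'' < 0\<close>. There the second variation is negative, so there is no local minimum, while
  the Lagrangian has a uniform strict local maximum in \<open>v'\<close> at \<open>z\<^sub>2(F)\<close>, so every such profile is
  a local maximum for the \<open>C\<^sup>1\<close> norm.\<close>

section \<open>Integration of radial functions over the annulus\<close>

lemma open_annulus: "open (annulus a b :: (real^'n) set)"
proof -
  have "annulus a b = norm -` {a<..<b}" by (auto simp: annulus_def)
  then show ?thesis by (metis continuous_on_norm_id open_greaterThanLessThan open_vimage)
qed

lemma emeasure_annulus:
  assumes "0 \<le> a" "a \<le> b"
  shows "emeasure lborel (annulus a b :: (real^'n) set)
           = ennreal (unit_ball_vol CARD('n) * (b ^ CARD('n) - a ^ CARD('n)))"
proof (cases "a = b")
  case True
  then have "annulus a b = ({} :: (real^'n) set)" by (auto simp: annulus_def)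
  then show ?thesis using True by simp
next
  case False
  have shell: "annulus a b = ball (0::real^'n) b - cball 0 a"
    by (auto simp: annulus_def dist_norm)
  have "cball (0::real^'n) a \<subseteq> ball 0 b" using False assms by auto
  then have "emeasure lborel (ball (0::real^'n) b - cball 0 a)
      = emeasure lborel (ball (0::real^'n) b) - emeasure lborel (cball (0::real^'n) a)"
    by (intro emeasure_Diff) (auto simp: emeasure_cball assms)
  also have "\<dots> = ennreal (unit_ball_vol CARD('n) * (b ^ CARD('n) - a ^ CARD('n)))"
    using assms by (simp add: emeasure_ball emeasure_cball ennreal_minus algebra_simps)
  finally show ?thesis by (simp add: shell)
qed

lemma has_integral_power_pred:
  fixes a b :: real
  assumes "a \<le> b" "n \<ge> 1"
  shows "((\<lambda>r. r ^ (n - 1)) has_integral (b ^ n - a ^ n) / n) {a..b}"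
proof -
  have "((\<lambda>r. r ^ (n - 1)) has_integral (b ^ n / n - a ^ n / n)) {a..b}"
  proof (rule fundamental_theorem_of_calculus[OF assms(1)])
    fix x :: real
    have "((\<lambda>r. r ^ n / n) has_real_derivative x ^ (n - 1)) (at x within {a..b})"
      using assms(2) by (auto intro!: derivative_eq_intros)
    then show "((\<lambda>r. r ^ n / n) has_vector_derivative x ^ (n - 1)) (at x within {a..b})"
      by (simp add: has_real_derivative_iff_has_vector_derivative)
  qed
  then show ?thesis by (simp add: diff_divide_distrib)
qed

lemma emeasure_distr_norm_annulus_greaterThan:
  assumes R: "0 < R2" "R2 < R1"
  shows "emeasure (distr (density lborel (indicator (annulus R2 R1 :: (real^'n) set))) borel norm) {x<..}
       = (if x < R1 then ennreal (unit_ball_vol CARD('n) * (R1 ^ CARD('n) - max x R2 ^ CARD('n)))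
          else 0)"
proof -
  define A where "A = (annulus R2 R1 :: (real^'n) set)"
  have A: "A \<in> sets lborel" by (simp add: A_def open_annulus)
  have ray: "norm -` {x<..} \<in> sets (lborel::(real^'n) measure)"
    by (simp, intro borel_open open_vimage) (auto intro: continuous_intros)
  have "emeasure (distr (density lborel (indicator A)) borel norm) {x<..}
      = emeasure (density lborel (indicator A)) (norm -` {x<..} \<inter> space (density lborel (indicator A)))"
    by (rule emeasure_distr) auto
  also have "\<dots> = emeasure lborel (A \<inter> norm -` {x<..})"
    using emeasure_restricted[OF A ray] by simp
  also have "\<dots> = (if x < R1 then ennreal (unit_ball_vol CARD('n) * (R1 ^ CARD('n) - max x R2 ^ CARD('n)))
                    else 0)"
  proof (cases "x < R1")
    case True
    have "A \<inter> norm -` {x<..} = annulus (max x R2) R1"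
      unfolding A_def annulus_def by auto
    then show ?thesis using True R emeasure_annulus[of "max x R2" R1, where 'n='n] by simp
  next
    case False
    have "A \<inter> norm -` {x<..} = {}" unfolding A_def annulus_def using False by auto
    then show ?thesis using False by simp
  qed
  finally show ?thesis by (simp add: A_def)
qed

lemma emeasure_density_power_greaterThan:
  fixes a b c :: real
  assumes ab: "0 \<le> a" "a \<le> b" and n: "n \<ge> 1" and c: "0 \<le> c"
  shows "emeasure (density lborel (\<lambda>r. ennreal (real n * c * r ^ (n - 1) * indicator {a..b} r))) {x<..}
       = (if x < b then ennreal (c * (b ^ n - max x a ^ n)) else 0)"
proof -
  have "emeasure (density lborel (\<lambda>r. ennreal (real n * c * r ^ (n - 1) * indicator {a..b} r))) {x<..}
      = (\<integral>\<^sup>+r. ennreal (real n * c * r ^ (n - 1) * indicator {a..b} r) * indicator {x<..} r \<partial>lborel)"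
    by (subst emeasure_density) auto
  also have "\<dots> = (\<integral>\<^sup>+r. ennreal (real n * c * r ^ (n - 1)) * indicator ({a..b} \<inter> {x<..}) r \<partial>lborel)"
    by (intro nn_integral_cong) (auto simp: indicator_def)
  also have "\<dots> = (if x < b then ennreal (c * (b ^ n - max x a ^ n)) else 0)"
  proof (cases "x < b")
    case True
    define m where "m = max x a"
    have m: "0 \<le> m" "m \<le> b" using True ab by (auto simp: m_def)
    have "((\<lambda>r. n * c * r ^ (n - 1)) has_integral n * c * ((b ^ n - m ^ n) / n)) {m..b}"
      by (intro has_integral_mult_right has_integral_power_pred) (use m n in auto)
    then have I: "((\<lambda>r. n * c * r ^ (n - 1)) has_integral c * (b ^ n - m ^ n)) {m..b}"
      using n by simp
    have I': "((\<lambda>r. n * c * r ^ (n - 1)) has_integral c * (b ^ n - m ^ n)) ({a..b} \<inter> {x<..})"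
    proof (cases "x < a")
      case True
      then have "{a..b} \<inter> {x<..} = {m..b}" by (auto simp: m_def)
      then show ?thesis using I by simp
    next
      case False
      then have e: "{a..b} \<inter> {x<..} = {m<..b}" by (auto simp: m_def)
      show ?thesis unfolding e
        by (rule has_integral_spike_set_eq[THEN iffD1, OF _ _ I])
           (auto intro: negligible_subset[of "{m}"])
    qed
    have "(\<integral>\<^sup>+r. ennreal (n * c * r ^ (n - 1)) * indicator ({a..b} \<inter> {x<..}) r \<partial>lborel)
        = ennreal (c * (b ^ n - m ^ n))"
      by (rule nn_integral_has_integral_lebesgue'[OF _ I']) (use ab c in auto)
    then show ?thesis using True by (simp add: m_def)
  next
    case False
    then have "{a..b} \<inter> {x<..} = {}" by auto
    then show ?thesis using False by simp
  qed
  finally show ?thesis .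
qed

lemma distr_norm_annulus:
  assumes R: "0 < R2" "R2 < R1"
  shows "distr (density lborel (indicator (annulus R2 R1 :: (real^'n) set))) borel norm
       = density lborel (\<lambda>r. ennreal (real CARD('n) * unit_ball_vol CARD('n)
                                        * r ^ (CARD('n) - 1) * indicator {R2..R1} r))"
proof (rule measure_eqI_lessThan)
  fix x
  show "emeasure (distr (density lborel (indicator (annulus R2 R1 :: (real^'n) set))) borel norm) {x<..} < \<infinity>"
    by (simp add: emeasure_distr_norm_annulus_greaterThan[OF R])
  show "emeasure (distr (density lborel (indicator (annulus R2 R1 :: (real^'n) set))) borel norm) {x<..}
      = emeasure (density lborel (\<lambda>r. ennreal (real CARD('n) * unit_ball_vol CARD('n)
                                        * r ^ (CARD('n) - 1) * indicator {R2..R1} r))) {x<..}"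
  proof -
    have "emeasure (density lborel (\<lambda>r. ennreal (real CARD('n) * unit_ball_vol CARD('n)
                                        * r ^ (CARD('n) - 1) * indicator {R2..R1} r))) {x<..}
        = (if x < R1 then ennreal (unit_ball_vol CARD('n) * (R1 ^ CARD('n) - max x R2 ^ CARD('n))) else 0)"
      by (rule emeasure_density_power_greaterThan) (use R in \<open>auto simp: Suc_leI\<close>)
    then show ?thesis by (simp add: emeasure_distr_norm_annulus_greaterThan[OF R])
  qed
qed simp_all

lemma compact_cl_annulus: "compact (cl_annulus R2 R1 :: (real^'n) set)"
proof -
  have "cl_annulus R2 R1 = cball (0::real^'n) R1 \<inter> norm -` {R2..}"
    by (auto simp: cl_annulus_def)
  moreover have "closed (norm -` {R2..} :: (real^'n) set)"
    by (intro closed_vimage) (auto intro: continuous_intros)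
  ultimately show ?thesis by (simp add: compact_Int_closed)
qed

lemma integral_annulus_radial:
  fixes h :: "real \<Rightarrow> real"
  assumes R: "0 < R2" "R2 < R1" and h: "continuous_on {R2..R1} h"
  shows "integral (annulus R2 R1 :: (real^'n) set) (\<lambda>x. h (norm x))
     = real CARD('n) * unit_ball_vol CARD('n) * integral {R2..R1} (\<lambda>r. r ^ (CARD('n) - 1) * h r)"
proof -
  define K where "K = real CARD('n) * unit_ball_vol CARD('n)"
  define A where "A = (annulus R2 R1 :: (real^'n) set)"
  define h' where "h' = (\<lambda>r. indicator {R2..R1} r *\<^sub>R h r)"
  have K: "K > 0" by (simp add: K_def)
  have A: "A \<in> sets lborel" by (simp add: A_def open_annulus)
  have h'_meas: "h' \<in> borel_measurable borel"
    unfolding h'_def by (rule borel_measurable_continuous_on_indicator[OF _ h]) simp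
  have "continuous_on (cl_annulus R2 R1) (\<lambda>x::real^'n. h (norm x))"
    by (rule continuous_on_compose2[OF h]) (auto simp: cl_annulus_def intro: continuous_intros)
  then have "set_integrable lborel (cl_annulus R2 R1) (\<lambda>x::real^'n. h (norm x))"
    unfolding set_integrable_def by (rule borel_integrable_compact[OF compact_cl_annulus])
  then have int_A: "set_integrable lborel A (\<lambda>x. h (norm x))"
    by (rule set_integrable_subset) (auto simp: A A_def annulus_def cl_annulus_def)
  have int_I: "set_integrable lborel {R2..R1} (\<lambda>r. K * r ^ (CARD('n) - 1) * h r)"
    unfolding set_integrable_def by (rule borel_integrable_compact) (auto intro!: continuous_intros h)
  have "integral A (\<lambda>x. h (norm x)) = (LINT x|lborel. indicator A x *\<^sub>R h (norm x))"
    using set_borel_integral_eq_integral(2)[OF int_A] by (simp add: set_lebesgue_integral_def)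
  also have "\<dots> = (LINT x|lborel. indicator A x *\<^sub>R h' (norm x))"
    by (intro Bochner_Integration.integral_cong) (auto simp: h'_def A_def annulus_def indicator_def)
  also have "\<dots> = integral\<^sup>L (density lborel (\<lambda>x. ennreal (indicator A x))) (\<lambda>x. h' (norm x))"
    using A h'_meas by (subst integral_density) (auto simp: borel_measurable_indicator)
  also have "\<dots> = integral\<^sup>L (distr (density lborel (indicator A)) borel norm) h'"
    using h'_meas by (subst integral_distr) (auto simp: ennreal_indicator)
  also have "\<dots> = integral\<^sup>L (density lborel (\<lambda>r. ennreal (K * r ^ (CARD('n) - 1) * indicator {R2..R1} r))) h'"
    unfolding A_def K_def distr_norm_annulus[OF R] ..
  also have "\<dots> = (LINT r|lborel. (K * r ^ (CARD('n) - 1) * indicator {R2..R1} r) *\<^sub>R h' r)"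
  proof (intro integral_density)
    show "AE r in lborel. 0 \<le> K * r ^ (CARD('n) - 1) * indicator {R2..R1} r"
      using K R by (intro AE_I2) (auto simp: indicator_def)
  qed (use h'_meas in auto)
  also have "\<dots> = (LINT r|lborel. indicator {R2..R1} r *\<^sub>R (K * r ^ (CARD('n) - 1) * h r))"
    by (intro Bochner_Integration.integral_cong) (auto simp: h'_def indicator_def)
  also have "\<dots> = integral {R2..R1} (\<lambda>r. K * r ^ (CARD('n) - 1) * h r)"
    using set_borel_integral_eq_integral(2)[OF int_I] by (simp add: set_lebesgue_integral_def)
  also have "\<dots> = K * integral {R2..R1} (\<lambda>r. r ^ (CARD('n) - 1) * h r)"
    by (simp add: mult.assoc)
  finally show ?thesis by (simp add: A_def K_def)
qed
section \<open>Gradients of radial functions and the norm of \<open>U\<close>\<close>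

lemma power2_norm_add_scaleR:
  fixes x v :: "'a::real_inner"
  shows "(norm (x + t *\<^sub>R v))^2 = (norm x)^2 + 2*t*(x \<bullet> v) + t^2 * (norm v)^2"
  unfolding power2_norm_eq_inner by (simp add: inner_add_left inner_add_right inner_commute algebra_simps power2_eq_square)

lemma mem_cl_annulus_iff_power2:
  fixes y :: "real^'n"
  assumes "0 \<le> R2" "0 \<le> R1"
  shows "y \<in> cl_annulus R2 R1 \<longleftrightarrow> R2^2 \<le> (norm y)^2 \<and> (norm y)^2 \<le> R1^2"
  using assms by (auto simp: cl_annulus_def power_mono intro: power2_le_imp_le)

lemma segment_in_cl_annulus_outward:
  fixes x v :: "real^'n"
  assumes R: "0 < R2" and x: "R2 \<le> norm x" "norm x < R1" and xv: "x \<bullet> v > 0"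
  shows "\<exists>\<delta>>0. \<forall>t\<in>{0..\<delta>}. x + t *\<^sub>R v \<in> cl_annulus R2 R1"
proof -
  have R1: "0 \<le> R1" using R x by linarith
  have gap: "(norm x)^2 < R1^2" using x R by (simp add: power_strict_mono)
  define \<delta> where "\<delta> = min 1 ((R1^2 - (norm x)^2) / (2 * (x \<bullet> v) + (norm v)^2))"
  have pos: "0 < 2 * (x \<bullet> v) + (norm v)^2" using xv by (simp add: add_pos_nonneg)
  have "\<delta> > 0" unfolding \<delta>_def using pos gap by (auto intro!: divide_pos_pos)
  moreover have "x + t *\<^sub>R v \<in> cl_annulus R2 R1" if t: "t \<in> {0..\<delta>}" for t
  proof -
    have "t * (2 * (x \<bullet> v) + (norm v)^2) \<le> R1^2 - (norm x)^2"
      using t pos unfolding \<delta>_def by (auto simp: field_simps)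
    then have "2*t*(x \<bullet> v) + t*(norm v)^2 \<le> R1^2 - (norm x)^2" by (simp add: algebra_simps)
    moreover have "t^2 * (norm v)^2 \<le> t * (norm v)^2"
      using t mult_left_le[of t t] unfolding \<delta>_def by (intro mult_right_mono) (auto simp: power2_eq_square)
    moreover have "R2^2 \<le> (norm x)^2" using x R by (simp add: power_mono)
    moreover have "0 \<le> 2*t*(x \<bullet> v)" "0 \<le> t^2 * (norm v)^2" using t xv by auto
    ultimately have "R2^2 \<le> (norm (x + t *\<^sub>R v))^2" "(norm (x + t *\<^sub>R v))^2 \<le> R1^2"
      unfolding power2_norm_add_scaleR by linarith+
    then show ?thesis using mem_cl_annulus_iff_power2[OF less_imp_le[OF R] R1] by blast
  qed
  ultimately show ?thesis by blast
qed

lemma segment_in_cl_annulus_inward: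
  fixes x v :: "real^'n"
  assumes R: "0 < R2" "R2 < R1" and x: "norm x = R1" and xv: "x \<bullet> v < 0"
  shows "\<exists>\<delta>>0. \<forall>t\<in>{0..\<delta>}. x + t *\<^sub>R v \<in> cl_annulus R2 R1"
proof -
  have v: "(norm v)^2 > 0" using xv by auto
  have R1: "0 \<le> R1" using R by linarith
  have gap: "R2^2 < R1^2" using R by (simp add: power_strict_mono)
  define \<delta> where "\<delta> = min (- (x \<bullet> v) / (norm v)^2) ((R1^2 - R2^2) / (2 * (- (x \<bullet> v))))"
  have "- (x \<bullet> v) / (norm v)^2 > 0" using xv v by (intro divide_pos_pos) auto
  moreover have "(R1^2 - R2^2) / (2 * (- (x \<bullet> v))) > 0" using xv gap by (intro divide_pos_pos) auto
  ultimately have "\<delta> > 0" unfolding \<delta>_def by simp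
  moreover have "x + t *\<^sub>R v \<in> cl_annulus R2 R1" if t: "t \<in> {0..\<delta>}" for t
  proof -
    have t1: "t * (norm v)^2 \<le> - (x \<bullet> v)"
      using t v unfolding \<delta>_def by (auto simp: field_simps)
    have "t^2 * (norm v)^2 \<le> - (t * (x \<bullet> v))"
      using mult_left_mono[OF t1, of t] t by (simp add: power2_eq_square algebra_simps)
    moreover have "t * (2 * (- (x \<bullet> v))) \<le> R1^2 - R2^2"
      using t xv unfolding \<delta>_def by (auto simp: field_simps)
    then have "- (2 * (t * (x \<bullet> v))) \<le> R1^2 - R2^2" by (simp add: algebra_simps)
    moreover have "0 \<le> t^2 * (norm v)^2" "t * (x \<bullet> v) \<le> 0" using t xv by (auto simp: mult_le_0_iff)
    moreover have "(norm (x + t *\<^sub>R v))^2 = R1^2 + 2 * (t * (x \<bullet> v)) + t^2 * (norm v)^2"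
      by (simp add: power2_norm_add_scaleR x mult.assoc)
    ultimately have "R2^2 \<le> (norm (x + t *\<^sub>R v))^2" "(norm (x + t *\<^sub>R v))^2 \<le> R1^2"
      by linarith+
    then show ?thesis using mem_cl_annulus_iff_power2[OF less_imp_le[OF R(1)] R1] by blast
  qed
  ultimately show ?thesis by blast
qed

lemma has_derivative_within_segment_unique:
  fixes u :: "'a::real_inner \<Rightarrow> real"
  assumes "\<delta> > 0" and seg: "\<forall>t\<in>{0..\<delta>}. x + t *\<^sub>R v \<in> S"
    and d1: "(u has_derivative (\<lambda>h. g \<bullet> h)) (at x within S)"
    and d2: "(u has_derivative (\<lambda>h. g' \<bullet> h)) (at x within S)"
  shows "g \<bullet> v = g' \<bullet> v"
proof -
  let ?p = "\<lambda>t::real. x + t *\<^sub>R v"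
  have p: "(?p has_derivative (\<lambda>t. t *\<^sub>R v)) (at 0 within {0..\<delta>})"
    by (auto intro!: derivative_eq_intros)
  have img: "?p ` {0..\<delta>} \<subseteq> S" using seg by auto
  have "((u \<circ> ?p) has_derivative ((\<lambda>h. g \<bullet> h) \<circ> (\<lambda>t. t *\<^sub>R v))) (at 0 within {0..\<delta>})"
       "((u \<circ> ?p) has_derivative ((\<lambda>h. g' \<bullet> h) \<circ> (\<lambda>t. t *\<^sub>R v))) (at 0 within {0..\<delta>})"
    using diff_chain_within[OF p has_derivative_subset[OF _ img]] d1 d2 by simp_all
  then have "((\<lambda>h. g \<bullet> h) \<circ> (\<lambda>t. t *\<^sub>R v)) = ((\<lambda>h. g' \<bullet> h) \<circ> (\<lambda>t::real. t *\<^sub>R v))"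
  proof (rule frechet_derivative_unique_within)
    fix i :: real and e :: real assume "i \<in> Basis" "0 < e"
    then show "\<exists>d. 0 < \<bar>d\<bar> \<and> \<bar>d\<bar> < e \<and> 0 + d *\<^sub>R i \<in> {0..\<delta>}"
      using \<open>\<delta> > 0\<close> by (intro exI[of _ "min (e/2) \<delta>"]) auto
  qed
  then show ?thesis by (metis comp_apply scaleR_one)
qed

lemma inner_eq_on_half_space_imp_eq:
  fixes a g g' :: "'a::real_inner"
  assumes "a \<noteq> 0" and half: "\<And>v. a \<bullet> v > 0 \<Longrightarrow> g \<bullet> v = g' \<bullet> v"
  shows "g = g'"
proof -
  have all: "g \<bullet> w = g' \<bullet> w" for w
  proof -
    have aa: "a \<bullet> a > 0" using \<open>a \<noteq> 0\<close> by simp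
    define c where "c = (\<bar>a \<bullet> w\<bar> + 1) / (a \<bullet> a)"
    have c: "c > 0" unfolding c_def using aa by (intro divide_pos_pos) auto
    have "c * (a \<bullet> a) = \<bar>a \<bullet> w\<bar> + 1" unfolding c_def using aa by simp
    then have "a \<bullet> (w + c *\<^sub>R a) > 0" by (simp add: inner_add_right)
    then have "g \<bullet> (w + c *\<^sub>R a) = g' \<bullet> (w + c *\<^sub>R a)" by (rule half)
    moreover have "g \<bullet> (c *\<^sub>R a) = g' \<bullet> (c *\<^sub>R a)" using c aa by (intro half) simp
    ultimately show ?thesis using c by (auto simp: inner_add_right)
  qed
  have "(g - g') \<bullet> (g - g') = 0" using all by (simp add: inner_diff_left inner_diff_right)
  then show "g = g'" by simp
qed

text \<open>Boundary points of the annulus are not interior, but every direction of an open half-space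
  enters the annulus; this makes \<open>grad\<close> well defined.\<close>
lemma has_derivative_within_cl_annulus_unique:
  fixes u :: "real^'n \<Rightarrow> real"
  assumes R: "0 < R2" "R2 < R1" and x: "x \<in> cl_annulus R2 R1"
    and d1: "(u has_derivative (\<lambda>h. g \<bullet> h)) (at x within cl_annulus R2 R1)"
    and d2: "(u has_derivative (\<lambda>h. g' \<bullet> h)) (at x within cl_annulus R2 R1)"
  shows "g = g'"
proof (rule inner_eq_on_half_space_imp_eq)
  define a where "a = (if norm x = R1 then -x else x)"
  show "a \<noteq> 0" using x R by (auto simp: a_def cl_annulus_def)
  fix v assume av: "a \<bullet> v > 0"
  have "\<exists>\<delta>>0. \<forall>t\<in>{0..\<delta>}. x + t *\<^sub>R v \<in> cl_annulus R2 R1"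
  proof (cases "norm x = R1")
    case True
    then show ?thesis using av by (intro segment_in_cl_annulus_inward[OF R True]) (simp add: a_def)
  next
    case False
    then show ?thesis
      using av x by (intro segment_in_cl_annulus_outward[OF R(1)]) (auto simp: a_def cl_annulus_def)
  qed
  then show "g \<bullet> v = g' \<bullet> v" using has_derivative_within_segment_unique d1 d2 by blast
qed

lemma grad_radial:
  fixes u :: "real^'n \<Rightarrow> real"
  assumes R: "0 < R2" "R2 < R1" and x: "x \<in> cl_annulus R2 R1"
    and vd: "(v has_real_derivative c) (at (norm x) within {R2..R1})"
    and ueq: "\<forall>y\<in>cl_annulus R2 R1. u y = v (norm y)"
  shows "grad R2 R1 u x = (c / norm x) *\<^sub>R x"
proof -
  have xne: "x \<noteq> 0" using x R by (auto simp: cl_annulus_def)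
  have nd: "(norm has_derivative (\<lambda>h. h \<bullet> sgn x)) (at x within cl_annulus R2 R1)"
    using has_derivative_norm[OF xne] by (auto intro: has_derivative_at_withinI)
  have img: "norm ` cl_annulus R2 R1 \<subseteq> {R2..R1}" by (auto simp: cl_annulus_def)
  have vd': "(v has_derivative (\<lambda>t. c * t)) (at (norm x) within norm ` cl_annulus R2 R1)"
    using has_derivative_subset[OF vd[unfolded has_field_derivative_def] img] by simp
  have ch: "((v \<circ> norm) has_derivative ((\<lambda>t. c * t) \<circ> (\<lambda>h. h \<bullet> sgn x))) (at x within cl_annulus R2 R1)"
    by (rule diff_chain_within[OF nd vd'])
  have ch2: "(u has_derivative ((\<lambda>t. c * t) \<circ> (\<lambda>h. h \<bullet> sgn x))) (at x within cl_annulus R2 R1)"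
    by (rule has_derivative_transform_within[OF ch zero_less_one x]) (use ueq in simp)
  have D: "(u has_derivative (\<lambda>h. ((c / norm x) *\<^sub>R x) \<bullet> h)) (at x within cl_annulus R2 R1)"
    by (rule has_derivative_eq_rhs[OF ch2]) (auto simp: fun_eq_iff sgn_div_norm inner_commute divide_inverse)
  show ?thesis
    unfolding grad_def
  proof (rule the_equality)
    fix g assume "(u has_derivative (\<lambda>h. g \<bullet> h)) (at x within cl_annulus R2 R1)"
    then show "g = (c / norm x) *\<^sub>R x" by (rule has_derivative_within_cl_annulus_unique[OF R x _ D])
  qed (rule D)
qed


lemma C1_on_with_continuous_on: "C1_on_with a b v v' \<Longrightarrow> continuous_on {a..b} v"
  unfolding C1_on_with_def by (intro DERIV_continuous_on) blast

lemma norm_image_cl_annulus: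
  assumes "0 < R2" "R2 < R1"
  shows "norm ` (cl_annulus R2 R1 :: (real^'n) set) = {R2..R1}"
proof
  show "norm ` (cl_annulus R2 R1 :: (real^'n) set) \<subseteq> {R2..R1}" by (auto simp: cl_annulus_def)
  show "{R2..R1} \<subseteq> norm ` (cl_annulus R2 R1 :: (real^'n) set)"
  proof
    fix r assume r: "r \<in> {R2..R1}"
    obtain e :: "real^'n" where e: "e \<in> Basis" using nonempty_Basis by blast
    have ne: "norm e = 1" using e by simp
    have "norm (r *\<^sub>R e) = r" using r assms ne by simp
    moreover then have "r *\<^sub>R e \<in> cl_annulus R2 R1" using r by (simp add: cl_annulus_def)
    ultimately show "r \<in> norm ` (cl_annulus R2 R1 :: (real^'n) set)" by (metis image_eqI)
  qed
qed

lemma norm_grad_radial: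
  fixes u :: "real^'n \<Rightarrow> real"
  assumes R: "0 < R2" "R2 < R1" and C1: "C1_on_with R2 R1 v v'"
    and ueq: "\<forall>y\<in>cl_annulus R2 R1. u y = v (norm y)" and x: "x \<in> cl_annulus R2 R1"
  shows "norm (grad R2 R1 u x) = \<bar>v' (norm x)\<bar>"
proof -
  have nx: "norm x \<in> {R2..R1}" using x by (auto simp: cl_annulus_def)
  have xne: "norm x > 0" using x R by (auto simp: cl_annulus_def)
  have vd: "(v has_real_derivative v' (norm x)) (at (norm x) within {R2..R1})"
    using C1 nx unfolding C1_on_with_def by blast
  have "grad R2 R1 u x = (v' (norm x) / norm x) *\<^sub>R x" by (rule grad_radial[OF R x vd ueq])
  then show ?thesis using xne by simp
qed

lemma normU_radial:
  fixes u :: "real^'n \<Rightarrow> real"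
  assumes R: "0 < R2" "R2 < R1" and C1: "C1_on_with R2 R1 v v'"
    and ueq: "\<forall>y\<in>cl_annulus R2 R1. u y = v (norm y)"
  shows "normU R2 R1 u = (SUP r\<in>{R2..R1}. \<bar>v r\<bar>) + (SUP r\<in>{R2..R1}. \<bar>v' r\<bar>)"
proof -
  have im: "norm ` (cl_annulus R2 R1 :: (real^'n) set) = {R2..R1}" by (rule norm_image_cl_annulus[OF R])
  have "(SUP x\<in>cl_annulus R2 R1. \<bar>u x\<bar>) = (SUP x\<in>(cl_annulus R2 R1 :: (real^'n) set). \<bar>v (norm x)\<bar>)"
    using ueq by (metis (mono_tags, lifting) image_cong)
  also have "\<dots> = (SUP r\<in>norm ` (cl_annulus R2 R1 :: (real^'n) set). \<bar>v r\<bar>)"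
    by (simp add: image_image)
  finally have s1: "(SUP x\<in>cl_annulus R2 R1. \<bar>u x\<bar>) = (SUP r\<in>{R2..R1}. \<bar>v r\<bar>)" using im by simp
  have "(SUP x\<in>cl_annulus R2 R1. norm (grad R2 R1 u x)) = (SUP x\<in>(cl_annulus R2 R1 :: (real^'n) set). \<bar>v' (norm x)\<bar>)"
    using norm_grad_radial[OF R C1 ueq] by (metis (mono_tags, lifting) image_cong)
  also have "\<dots> = (SUP r\<in>norm ` (cl_annulus R2 R1 :: (real^'n) set). \<bar>v' r\<bar>)"
    by (simp add: image_image)
  finally have s2: "(SUP x\<in>cl_annulus R2 R1. norm (grad R2 R1 u x)) = (SUP r\<in>{R2..R1}. \<bar>v' r\<bar>)" using im by simp
  show ?thesis unfolding normU_def s1 s2 ..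
qed

lemma normU_radial_le:
  fixes u :: "real^'n \<Rightarrow> real"
  assumes R: "0 < R2" "R2 < R1" and C1: "C1_on_with R2 R1 v v'"
    and ueq: "\<forall>y\<in>cl_annulus R2 R1. u y = v (norm y)"
    and b1: "\<forall>r\<in>{R2..R1}. \<bar>v r\<bar> \<le> M1" and b2: "\<forall>r\<in>{R2..R1}. \<bar>v' r\<bar> \<le> M2"
  shows "normU R2 R1 u \<le> M1 + M2"
proof -
  have ne: "{R2..R1} \<noteq> {}" using R by auto
  have "(SUP r\<in>{R2..R1}. \<bar>v r\<bar>) \<le> M1" using b1 ne by (intro cSUP_least) auto
  moreover have "(SUP r\<in>{R2..R1}. \<bar>v' r\<bar>) \<le> M2" using b2 ne by (intro cSUP_least) auto
  ultimately show ?thesis unfolding normU_radial[OF R C1 ueq] by simp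
qed

lemma abs_deriv_le_normU:
  fixes u :: "real^'n \<Rightarrow> real"
  assumes R: "0 < R2" "R2 < R1" and C1: "C1_on_with R2 R1 v v'"
    and ueq: "\<forall>y\<in>cl_annulus R2 R1. u y = v (norm y)" and r: "r \<in> {R2..R1}"
  shows "\<bar>v' r\<bar> \<le> normU R2 R1 u"
proof -
  have bdd: "bdd_above ((\<lambda>r. \<bar>g r\<bar>) ` {R2..R1})" if "continuous_on {R2..R1} g" for g :: "real \<Rightarrow> real"
    using that by (intro bounded_imp_bdd_above compact_imp_bounded compact_continuous_image continuous_intros) auto
  have c1: "continuous_on {R2..R1} v" by (rule C1_on_with_continuous_on[OF C1])
  have c2: "continuous_on {R2..R1} v'" using C1 by (simp add: C1_on_with_def)
  have R2in: "R2 \<in> {R2..R1}" using R by simp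
  have "0 \<le> \<bar>v R2\<bar>" by simp
  also have "\<dots> \<le> (SUP r\<in>{R2..R1}. \<bar>v r\<bar>)" by (rule cSUP_upper[OF R2in bdd[OF c1]])
  finally have a: "0 \<le> (SUP r\<in>{R2..R1}. \<bar>v r\<bar>)" .
  have b: "\<bar>v' r\<bar> \<le> (SUP r\<in>{R2..R1}. \<bar>v' r\<bar>)" by (rule cSUP_upper[OF r bdd[OF c2]])
  show ?thesis unfolding normU_radial[OF R C1 ueq] using a b by simp
qed

lemma C1_on_with_diff:
  "C1_on_with a b v v' \<Longrightarrow> C1_on_with a b w w' \<Longrightarrow> C1_on_with a b (\<lambda>r. w r - v r) (\<lambda>r. w' r - v' r)"
  unfolding C1_on_with_def by (auto intro!: continuous_intros DERIV_diff)

section \<open>The derivative of \<open>H\<close> and its decreasing branch \<open>z\<^sub>2\<close>\<close>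

definition dHfun :: "real \<Rightarrow> real \<Rightarrow> real" where
  "dHfun lam z = z * ((1/2) * z^2 - lam)"

lemma powr_three_halves:
  fixes a :: real
  assumes "0 \<le> a"
  shows "a powr (3/2) = sqrt a ^ 3"
proof -
  have "a powr (3/2) = a powr (1 + 1/2)" by simp
  also have "\<dots> = a powr 1 * a powr (1/2)" by (rule powr_add)
  also have "\<dots> = a * sqrt a" using assms by (simp add: powr_half_sqrt)
  also have "\<dots> = sqrt a ^ 3" using assms by (simp add: power3_eq_cube)
  finally show ?thesis .
qed

lemma dHfun_sqrt: assumes "lam > 0"
  shows "dHfun lam (sqrt (2*lam/3)) = - (sqrt (2*lam/3) ^ 3)" "dHfun lam (- sqrt (2*lam/3)) = sqrt (2*lam/3) ^ 3"
proof -
  let ?s = "sqrt (2*lam/3)"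
  have s2: "?s^2 = 2*lam/3" using assms by simp
  have "?s^3 = ?s * ?s^2" by (simp add: power3_eq_cube power2_eq_square)
  then show "dHfun lam ?s = - (?s ^ 3)" "dHfun lam (- ?s) = ?s ^ 3" unfolding dHfun_def using s2
    by (simp_all add: algebra_simps)
qed

lemma dHfun_diff: "dHfun lam a - dHfun lam b = (a - b) * ((a^2 + a*b + b^2)/2 - lam)"
  unfolding dHfun_def by (simp add: field_simps power2_eq_square)

lemma dHfun_strict_antimono:
  assumes "lam > 0" "- sqrt (2*lam/3) \<le> a" "a < b" "b \<le> sqrt (2*lam/3)"
  shows "dHfun lam b < dHfun lam a"
proof -
  let ?s = "sqrt (2*lam/3)"
  have s2: "?s^2 = 2*lam/3" using assms by simp
  have a2: "a^2 \<le> ?s^2" using assms by (intro abs_le_square_iff[THEN iffD1]) auto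
  have b2: "b^2 \<le> ?s^2" using assms by (intro abs_le_square_iff[THEN iffD1]) auto
  have "(a-b)^2 = a^2 - 2*a*b + b^2" by (simp add: power2_diff)
  moreover have "(a-b)^2 > 0" using assms by simp
  ultimately have "a^2 + a*b + b^2 < 3 * ?s^2" using a2 b2 by linarith
  then have "(a^2 + a*b + b^2)/2 - lam < 0" using s2 by simp
  moreover have "a - b < 0" using assms by simp
  ultimately have "dHfun lam a - dHfun lam b > 0" unfolding dHfun_diff by (simp add: mult_neg_neg)
  then show ?thesis by simp
qed

lemma dHfun_antimono:
  assumes "lam > 0" "- sqrt (2*lam/3) \<le> a" "a \<le> b" "b \<le> sqrt (2*lam/3)"
  shows "dHfun lam b \<le> dHfun lam a"
  using dHfun_strict_antimono[of lam a b] assms by (cases "a = b") auto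

lemma z2_eqI:
  assumes "lam > 0" "- sqrt (2*lam/3) < z" "z < sqrt (2*lam/3)" "dHfun lam z = A"
  shows "z2 lam A = z"
  unfolding z2_def
proof (rule the_equality)
  show "- sqrt (2*lam/3) < z \<and> z < sqrt (2*lam/3) \<and> z * ((1/2) * z^2 - lam) = A"
    using assms by (simp add: dHfun_def)
next
  fix y assume y: "- sqrt (2*lam/3) < y \<and> y < sqrt (2*lam/3) \<and> y * ((1/2) * y^2 - lam) = A"
  show "y = z"
  proof (rule ccontr)
    assume "y \<noteq> z"
    then consider "y < z" | "z < y" by linarith
    then show False
    proof cases
      case 1 then have "dHfun lam z < dHfun lam y" using dHfun_strict_antimono[of lam y z] assms y by auto
      then show False using y assms by (simp add: dHfun_def)
    next
      case 2 then have "dHfun lam y < dHfun lam z" using dHfun_strict_antimono[of lam z y] assms y by auto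
      then show False using y assms by (simp add: dHfun_def)
    qed
  qed
qed

lemma z2_root:
  assumes "lam > 0" "\<bar>A\<bar> < sqrt (2*lam/3) ^ 3"
  shows "- sqrt (2*lam/3) < z2 lam A" "z2 lam A < sqrt (2*lam/3)" "dHfun lam (z2 lam A) = A"
proof -
  let ?s = "sqrt (2*lam/3)"
  have sp: "?s > 0" using assms by simp
  have cont: "continuous_on {-?s..?s} (dHfun lam)" unfolding dHfun_def by (intro continuous_intros)
  have "\<exists>x\<ge>-?s. x \<le> ?s \<and> dHfun lam x = A"
    by (rule IVT2'[OF _ _ _ cont]) (use dHfun_sqrt[OF assms(1)] assms sp in auto)
  then obtain z where z: "- ?s \<le> z" "z \<le> ?s" "dHfun lam z = A" by auto
  have "z \<noteq> ?s" using z dHfun_sqrt[OF assms(1)] assms by auto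
  moreover have "z \<noteq> - ?s" using z dHfun_sqrt[OF assms(1)] assms by auto
  ultimately have z': "- ?s < z" "z < ?s" using z by auto
  have "z2 lam A = z" by (rule z2_eqI[OF assms(1) z' z(3)])
  then show "- ?s < z2 lam A" "z2 lam A < ?s" "dHfun lam (z2 lam A) = A" using z' z by auto
qed

lemma z2_antimono:
  assumes "lam > 0" "\<bar>A\<bar> < sqrt (2*lam/3) ^ 3" "\<bar>A'\<bar> < sqrt (2*lam/3) ^ 3" "A \<le> A'"
  shows "z2 lam A' \<le> z2 lam A"
proof (rule ccontr)
  assume "\<not> z2 lam A' \<le> z2 lam A"
  then have "dHfun lam (z2 lam A') < dHfun lam (z2 lam A)"
    using dHfun_strict_antimono[of lam "z2 lam A" "z2 lam A'"] z2_root[OF assms(1,2)] z2_root[OF assms(1,3)] assms(1) by auto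
  then show False using z2_root[OF assms(1,2)] z2_root[OF assms(1,3)] assms by auto
qed

lemma continuous_on_z2:
  assumes "lam > 0" "0 \<le> M" "M < sqrt (2*lam/3) ^ 3"
  shows "continuous_on {-M..M} (z2 lam)"
proof -
  let ?s = "sqrt (2*lam/3)"
  have hM: "\<bar>M\<bar> < ?s^3" "\<bar>-M\<bar> < ?s^3" using assms by auto
  define S where "S = {z2 lam M .. z2 lam (-M)}"
  have Ssub: "\<forall>z\<in>S. - ?s < z \<and> z < ?s"
    using z2_root[OF assms(1) hM(1)] z2_root[OF assms(1) hM(2)] by (auto simp: S_def)
  have cont: "continuous_on S (dHfun lam)" unfolding dHfun_def by (intro continuous_intros)
  have inv: "\<forall>z\<in>S. z2 lam (dHfun lam z) = z" using Ssub z2_eqI[OF assms(1)] by auto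
  have img: "dHfun lam ` S = {-M..M}"
  proof
    show "dHfun lam ` S \<subseteq> {-M..M}"
    proof
      fix y assume "y \<in> dHfun lam ` S"
      then obtain z where z: "z \<in> S" "y = dHfun lam z" by auto
      have zs: "- ?s < z" "z < ?s" using Ssub z(1) by auto
      have "dHfun lam z \<le> dHfun lam (z2 lam M)"
        using dHfun_antimono[OF assms(1), of "z2 lam M" z] z zs z2_root[OF assms(1) hM(1)] by (auto simp: S_def)
      moreover have "dHfun lam (z2 lam (-M)) \<le> dHfun lam z"
        using dHfun_antimono[OF assms(1), of z "z2 lam (-M)"] z zs z2_root[OF assms(1) hM(2)] by (auto simp: S_def)
      ultimately show "y \<in> {-M..M}" using z z2_root[OF assms(1) hM(1)] z2_root[OF assms(1) hM(2)] by auto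
    qed
    show "{-M..M} \<subseteq> dHfun lam ` S"
    proof
      fix A assume A: "A \<in> {-M..M}"
      then have hA: "\<bar>A\<bar> < ?s^3" using assms by auto
      have "z2 lam A \<in> S" unfolding S_def
        using z2_antimono[OF assms(1) hA hM(1)] z2_antimono[OF assms(1) hM(2) hA] A by auto
      moreover have "dHfun lam (z2 lam A) = A" using z2_root[OF assms(1) hA] by simp
      ultimately show "A \<in> dHfun lam ` S" by (metis image_eqI)
    qed
  qed
  have "continuous_on (dHfun lam ` S) (z2 lam)"
    by (rule continuous_on_inv[OF cont _ inv]) (simp add: S_def)
  then show ?thesis using img by simp
qed

section \<open>Elementary estimates for quartic perturbations\<close>

lemma quartic_nonpos_near_0_linear_coeff:
  fixes a1 a2 a3 a4 e :: real
  assumes "e > 0" and nonpos: "\<And>\<epsilon>. \<bar>\<epsilon>\<bar> < e \<Longrightarrow> \<epsilon>*a1 + \<epsilon>^2*a2 + \<epsilon>^3*a3 + \<epsilon>^4*a4 \<le> 0"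
  shows "a1 = 0"
proof -
  define q where "q \<epsilon> = a1 + \<epsilon>*a2 + \<epsilon>^2*a3 + \<epsilon>^3*a4" for \<epsilon> :: real
  have q_lim: "(q \<longlongrightarrow> a1) (at 0 within S)" for S
    unfolding q_def by (auto intro!: tendsto_eq_intros)
  have q_sign: "\<epsilon> * q \<epsilon> \<le> 0" if "\<bar>\<epsilon>\<bar> < e" for \<epsilon>
    using nonpos[OF that] by (simp add: q_def algebra_simps power2_eq_square power3_eq_cube power4_eq_xxxx)
  have "\<forall>\<^sub>F \<epsilon> in at_right 0. q \<epsilon> \<le> 0"
    unfolding eventually_at_right_field
  proof (intro exI[of _ e] conjI allI impI)
    fix \<epsilon> :: real assume "0 < \<epsilon>" "\<epsilon> < e"
    then show "q \<epsilon> \<le> 0" using q_sign[of \<epsilon>] by (simp add: mult_le_0_iff)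
  qed (use \<open>e > 0\<close> in simp)
  then have "a1 \<le> 0" by (rule tendsto_upperbound[OF q_lim]) simp
  moreover have "\<forall>\<^sub>F \<epsilon> in at_left 0. 0 \<le> q \<epsilon>"
    unfolding eventually_at_left_field
  proof (intro exI[of _ "-e"] conjI allI impI)
    fix \<epsilon> :: real assume "-e < \<epsilon>" "\<epsilon> < 0"
    then show "0 \<le> q \<epsilon>" using q_sign[of \<epsilon>] by (simp add: mult_le_0_iff)
  qed (use \<open>e > 0\<close> in simp)
  then have "0 \<le> a1" by (rule tendsto_lowerbound[OF q_lim]) simp
  ultimately show ?thesis by simp
qed

lemma quartic_nonneg_near_0_quadratic_coeff:
  fixes a2 a3 a4 e :: real
  assumes "e > 0" and nonneg: "\<And>\<epsilon>. \<bar>\<epsilon>\<bar> < e \<Longrightarrow> 0 \<le> \<epsilon>^2*a2 + \<epsilon>^3*a3 + \<epsilon>^4*a4"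
  shows "0 \<le> a2"
proof -
  define q where "q \<epsilon> = a2 + \<epsilon>*a3 + \<epsilon>^2*a4" for \<epsilon> :: real
  have q_lim: "(q \<longlongrightarrow> a2) (at_right 0)"
    unfolding q_def by (auto intro!: tendsto_eq_intros)
  have "\<forall>\<^sub>F \<epsilon> in at_right 0. 0 \<le> q \<epsilon>"
    unfolding eventually_at_right_field
  proof (intro exI[of _ e] conjI allI impI)
    fix \<epsilon> :: real assume "0 < \<epsilon>" "\<epsilon> < e"
    then have "0 \<le> \<epsilon>^2 * q \<epsilon>"
      using nonneg[of \<epsilon>] by (simp add: q_def algebra_simps power2_eq_square power3_eq_cube power4_eq_xxxx)
    then show "0 \<le> q \<epsilon>" using \<open>0 < \<epsilon>\<close> by (simp add: zero_le_mult_iff)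
  qed (use \<open>e > 0\<close> in simp)
  then show ?thesis by (rule tendsto_lowerbound[OF q_lim]) simp
qed

lemma quartic_remainder_nonpos:
  fixes lam b :: real
  assumes "0 \<le> b" "3 * b^2 < 2 * lam"
  obtains e where "e > 0"
    "\<And>w d. \<bar>w\<bar> \<le> b \<Longrightarrow> \<bar>d\<bar> < e \<Longrightarrow> (3*w^2/2 - lam)/2 + w*d/2 + d^2/8 \<le> 0"
proof
  define \<kappa> where "\<kappa> = lam - 3 * b^2 / 2"
  have \<kappa>: "\<kappa> > 0" using assms by (simp add: \<kappa>_def)
  define e where "e = min 1 (\<kappa> / (b + 1))"
  show "e > 0" unfolding e_def using \<kappa> assms by auto
  have e1: "e \<le> 1" by (simp add: e_def)
  have e\<kappa>: "e * (b + 1) \<le> \<kappa>"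
    using assms by (simp add: e_def pos_le_divide_eq[symmetric])
  fix w d :: real assume w: "\<bar>w\<bar> \<le> b" and d: "\<bar>d\<bar> < e"
  have "w^2 \<le> b^2" using w by (metis abs_le_square_iff abs_of_nonneg assms(1))
  then have t1: "(3*w^2/2 - lam)/2 \<le> - \<kappa>/2" by (simp add: \<kappa>_def)
  have "w * d \<le> \<bar>w\<bar> * \<bar>d\<bar>" by (metis abs_ge_self abs_mult)
  also have "\<dots> \<le> b * \<bar>d\<bar>" using w by (intro mult_right_mono) auto
  finally have t2: "w * d / 2 \<le> b * \<bar>d\<bar> / 2" by simp
  have "d^2 = \<bar>d\<bar> * \<bar>d\<bar>" by (simp add: power2_eq_square abs_mult_self_eq)
  also have "\<dots> \<le> \<bar>d\<bar>" using d e1 by (intro mult_left_le) auto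
  finally have t3: "d^2 / 8 \<le> \<bar>d\<bar> / 8" by simp
  have "\<bar>d\<bar> * (b/2 + 1/8) \<le> e * (b/2 + 1/8)" using d assms by (intro mult_right_mono) auto
  also have "\<dots> \<le> e * (b + 1) / 2" using \<open>e > 0\<close> assms by (simp add: field_simps)
  finally have t4: "\<bar>d\<bar> * (b/2 + 1/8) \<le> \<kappa>/2" using e\<kappa> by simp
  show "(3*w^2/2 - lam)/2 + w*d/2 + d^2/8 \<le> 0" using t1 t2 t3 t4 by argo
qed

section \<open>The reduced one-dimensional functional\<close>

lemma continuous_nonneg_integral_0_imp_0:
  fixes h :: "real \<Rightarrow> real"
  assumes "a < b" "continuous_on {a..b} h" "\<And>x. x \<in> {a..b} \<Longrightarrow> 0 \<le> h x"
    and "integral {a..b} h = 0" and "x \<in> {a..b}"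
  shows "h x = 0"
proof -
  have "(h has_integral 0) {a..b}"
    using integrable_continuous_interval[OF assms(2)] assms(4) by (metis has_integral_integral)
  then show ?thesis
    using has_integral_0_cbox_imp_0[of a b h x] assms by auto
qed

lemma radial_eq_integral_deriv:
  fixes u :: "real^'n \<Rightarrow> real"
  assumes C1: "C1_on_with R2 R1 v v'" and v': "\<forall>r\<in>{R2..R1}. v' r = g r"
    and u: "\<forall>y\<in>cl_annulus R2 R1. u y = v (norm y)"
  shows "\<forall>x\<in>cl_annulus R2 R1. u x = v R2 + integral {R2..norm x} g"
proof
  fix x :: "real^'n" assume x: "x \<in> cl_annulus R2 R1"
  define r where "r = norm x"
  have r: "r \<in> {R2..R1}" using x by (auto simp: r_def cl_annulus_def)
  have "(v' has_integral v r - v R2) {R2..r}"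
  proof (rule fundamental_theorem_of_calculus)
    show "R2 \<le> r" using r by simp
    fix y assume y: "y \<in> {R2..r}"
    then have "(v has_vector_derivative v' y) (at y within {R2..R1})"
      using C1 r by (simp add: C1_on_with_def has_real_derivative_iff_has_vector_derivative)
    then show "(v has_vector_derivative v' y) (at y within {R2..r})"
      by (rule has_vector_derivative_within_subset) (use r in auto)
  qed
  then have "integral {R2..r} v' = v r - v R2" by (rule integral_unique)
  moreover have "integral {R2..r} v' = integral {R2..r} g"
    by (rule integral_cong) (use v' r in auto)
  ultimately show "u x = v R2 + integral {R2..norm x} g"
    using u x by (simp add: r_def)
qed

lemma deriv_eq_of_radial_eq_integral:
  fixes u :: "real^'n \<Rightarrow> real"
  assumes R: "0 < R2" "R2 < R1" and C1: "C1_on_with R2 R1 v v'"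
    and u: "\<forall>y\<in>cl_annulus R2 R1. u y = v (norm y)" and g: "continuous_on {R2..R1} g"
    and u_eq: "\<forall>x\<in>cl_annulus R2 R1. u x = u0 + integral {R2..norm x} g"
  shows "\<forall>r\<in>{R2..R1}. v' r = g r"
proof
  fix r assume r: "r \<in> {R2..R1}"
  have v_eq: "v s = u0 + integral {R2..s} g" if s: "s \<in> {R2..R1}" for s
  proof -
    obtain x :: "real^'n" where "x \<in> cl_annulus R2 R1" "norm x = s"
      using s norm_image_cl_annulus[OF R] by (metis imageE)
    then show ?thesis using u_eq u by auto
  qed
  have "((\<lambda>s. u0 + integral {R2..s} g) has_vector_derivative g r) (at r within {R2..R1})"
    using integral_has_vector_derivative[OF g r] by (auto intro!: derivative_eq_intros)
  then have "(v has_vector_derivative g r) (at r within {R2..R1})"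
    by (rule has_vector_derivative_transform_within[OF _ zero_less_one r]) (use v_eq in simp)
  moreover have "(v has_vector_derivative v' r) (at r within {R2..R1})"
    using C1 r by (simp add: C1_on_with_def has_real_derivative_iff_has_vector_derivative)
  ultimately show "v' r = g r"
    using vector_derivative_unique_within_closed_interval[of R2 R1 r] R r by auto
qed

text \<open>The witness is \<open>u + \<epsilon> \<Phi>(|x|)\<close> with \<open>\<Phi>' = \<psi>\<close>.\<close>
lemma radial_perturbation:
  fixes u :: "real^'n \<Rightarrow> real"
  assumes R: "0 < R2" "R2 < R1" and C1: "C1_on_with R2 R1 v v'" and v'0: "v' R1 = 0" "v' R2 = 0"
    and u: "\<forall>y\<in>cl_annulus R2 R1. u y = v (norm y)"
    and \<psi>: "continuous_on {R2..R1} \<psi>" and \<psi>0: "\<psi> R1 = 0" "\<psi> R2 = 0"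
  obtains M where "0 \<le> M"
    "\<And>\<epsilon>. \<exists>w vw. w \<in> Uspace R2 R1 \<and> C1_on_with R2 R1 vw (\<lambda>r. v' r + \<epsilon> * \<psi> r)
        \<and> (\<forall>y\<in>cl_annulus R2 R1. w y = vw (norm y)) \<and> normU R2 R1 (\<lambda>x. w x - u x) \<le> \<bar>\<epsilon>\<bar> * M"
proof -
  define \<Phi> where "\<Phi> r = integral {R2..r} \<psi>" for r
  have \<Phi>': "(\<Phi> has_real_derivative \<psi> r) (at r within {R2..R1})" if "r \<in> {R2..R1}" for r
    unfolding \<Phi>_def[abs_def] has_real_derivative_iff_has_vector_derivative
    by (rule integral_has_vector_derivative[OF \<psi> that])
  obtain M1 where M1: "M1 \<ge> 0" "\<And>r. r \<in> {R2..R1} \<Longrightarrow> \<bar>\<Phi> r\<bar> \<le> M1"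
    using continuous_on_compact_bound[OF compact_Icc DERIV_continuous_on[OF \<Phi>']] by auto
  obtain M2 where M2: "M2 \<ge> 0" "\<And>r. r \<in> {R2..R1} \<Longrightarrow> \<bar>\<psi> r\<bar> \<le> M2"
    using continuous_on_compact_bound[OF compact_Icc \<psi>] by auto
  have "\<exists>w vw. w \<in> Uspace R2 R1 \<and> C1_on_with R2 R1 vw (\<lambda>r. v' r + \<epsilon> * \<psi> r)
      \<and> (\<forall>y\<in>cl_annulus R2 R1. w y = vw (norm y)) \<and> normU R2 R1 (\<lambda>x. w x - u x) \<le> \<bar>\<epsilon>\<bar> * (M1 + M2)"
    for \<epsilon>
  proof -
    define w where "w x = u x + \<epsilon> * \<Phi> (norm x)" for x
    have C1_w: "C1_on_with R2 R1 (\<lambda>r. v r + \<epsilon> * \<Phi> r) (\<lambda>r. v' r + \<epsilon> * \<psi> r)"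
      using C1 unfolding C1_on_with_def by (auto intro!: continuous_intros \<psi> DERIV_add DERIV_cmult \<Phi>')
    have w: "\<forall>y\<in>cl_annulus R2 R1. w y = v (norm y) + \<epsilon> * \<Phi> (norm y)" using u by (simp add: w_def)
    have "w \<in> Uspace R2 R1" unfolding Uspace_def mem_Collect_eq
      by (intro exI[of _ "\<lambda>r. v r + \<epsilon> * \<Phi> r"] exI[of _ "\<lambda>r. v' r + \<epsilon> * \<psi> r"])
         (use C1_w w v'0 \<psi>0 in auto)
    moreover have "normU R2 R1 (\<lambda>x. w x - u x) \<le> \<bar>\<epsilon>\<bar> * M1 + \<bar>\<epsilon>\<bar> * M2"
    proof (rule normU_radial_le[OF R])
      show "C1_on_with R2 R1 (\<lambda>r. \<epsilon> * \<Phi> r) (\<lambda>r. \<epsilon> * \<psi> r)"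
        unfolding C1_on_with_def by (auto intro!: continuous_intros \<psi> DERIV_cmult \<Phi>')
      show "\<forall>y\<in>cl_annulus R2 R1. w y - u y = \<epsilon> * \<Phi> (norm y)" by (simp add: w_def)
      show "\<forall>r\<in>{R2..R1}. \<bar>\<epsilon> * \<Phi> r\<bar> \<le> \<bar>\<epsilon>\<bar> * M1" using M1 by (simp add: abs_mult mult_left_mono)
      show "\<forall>r\<in>{R2..R1}. \<bar>\<epsilon> * \<psi> r\<bar> \<le> \<bar>\<epsilon>\<bar> * M2" using M2 by (simp add: abs_mult mult_left_mono)
    qed
    ultimately show ?thesis
      using C1_w w by (intro exI[of _ w] exI[of _ "\<lambda>r. v r + \<epsilon> * \<Phi> r"]) (simp add: distrib_left)
  qed
  then show ?thesis using that[of "M1 + M2"] M1 M2 by auto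
qed

definition weighted_primitive :: "(real \<Rightarrow> real) \<Rightarrow> nat \<Rightarrow> real \<Rightarrow> real \<Rightarrow> real" where
  "weighted_primitive f n R2 r = integral {R2..r} (\<lambda>\<rho>. f \<rho> * \<rho> ^ (n - 1))"

text \<open>For radial \<open>u = v \<circ> |\<cdot>|\<close>, integrating \<open>f u\<close> by parts turns \<open>I[u]\<close> into a positive multiple
  of the integral of this Lagrangian along \<open>v'\<close>, a functional of \<open>v'\<close> alone.\<close>
definition radial_lagrangian :: "real \<Rightarrow> (real \<Rightarrow> real) \<Rightarrow> nat \<Rightarrow> real \<Rightarrow> real \<Rightarrow> real \<Rightarrow> real" where
  "radial_lagrangian lam f n R2 r z = r ^ (n - 1) * Hfun lam z + weighted_primitive f n R2 r * z"

definition radial_functional ::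
    "real \<Rightarrow> (real \<Rightarrow> real) \<Rightarrow> nat \<Rightarrow> real \<Rightarrow> real \<Rightarrow> (real \<Rightarrow> real) \<Rightarrow> real" where
  "radial_functional lam f n R2 R1 p = integral {R2..R1} (\<lambda>r. radial_lagrangian lam f n R2 r (p r))"

lemma radial_lagrangian_expansion:
  "radial_lagrangian lam f n R2 r (z + d) - radial_lagrangian lam f n R2 r z =
     d * (r ^ (n - 1) * dHfun lam z + weighted_primitive f n R2 r)
     + d^2 * (r ^ (n - 1) * (3*z^2/2 - lam)/2) + d^3 * (r ^ (n - 1) * z / 2) + d^4 * (r ^ (n - 1) / 8)"
  unfolding radial_lagrangian_def Hfun_def dHfun_def
  by (simp add: field_simps power2_eq_square power3_eq_cube power4_eq_xxxx)

locale radial_problem =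
  fixes R1 R2 lam :: real and f :: "real \<Rightarrow> real" and n :: nat
  assumes R: "0 < R2" "R2 < R1" and lam: "0 < lam" and f_cont: "continuous_on {R2..R1} f"
    and f_moment: "integral {R2..R1} (\<lambda>r. r ^ (n - 1) * f r) = 0"
    and f_small: "integral {R2..R1} (\<lambda>r. \<bar>r ^ (n - 1) * f r\<bar>) < R2 ^ (n - 1) * (2*lam/3) powr (3/2)"
begin

abbreviation "G \<equiv> weighted_primitive f n R2"
abbreviation "F \<equiv> Ffun n R2 f"
abbreviation "L \<equiv> radial_lagrangian lam f n R2"
abbreviation "J \<equiv> radial_functional lam f n R2 R1"

lemma has_real_derivative_weighted_primitive:
  "r \<in> {R2..R1} \<Longrightarrow> (G has_real_derivative f r * r ^ (n - 1)) (at r within {R2..R1})"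
  unfolding weighted_primitive_def[abs_def] has_real_derivative_iff_has_vector_derivative
  by (rule integral_has_vector_derivative) (auto intro!: continuous_intros f_cont)

lemma continuous_on_weighted_primitive: "continuous_on {R2..R1} G"
  by (rule DERIV_continuous_on[OF has_real_derivative_weighted_primitive])

lemma weighted_primitive_endpoints: "G R2 = 0" "G R1 = 0"
proof -
  show "G R2 = 0" by (simp add: weighted_primitive_def)
  have "(\<lambda>\<rho>. f \<rho> * \<rho> ^ (n - 1)) = (\<lambda>\<rho>. \<rho> ^ (n - 1) * f \<rho>)" by (simp add: fun_eq_iff mult.commute)
  then show "G R1 = 0" using f_moment by (simp only: weighted_primitive_def)
qed

lemma Ffun_weighted_primitive: "F r = - (1 / r ^ (n - 1)) * G r"
  by (simp add: Ffun_def weighted_primitive_def)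

lemma Ffun_endpoints: "F R2 = 0" "F R1 = 0"
  by (simp_all add: Ffun_weighted_primitive weighted_primitive_endpoints)

lemma weighted_primitive_eq_Ffun: "r \<in> {R2..R1} \<Longrightarrow> G r = - (r ^ (n - 1) * F r)"
  using R by (auto simp: Ffun_weighted_primitive)

lemma abs_Ffun_less: "r \<in> {R2..R1} \<Longrightarrow> \<bar>F r\<bar> < sqrt (2*lam/3) ^ 3"
proof -
  assume r: "r \<in> {R2..R1}"
  have fw_int: "(\<lambda>\<rho>. \<bar>\<rho> ^ (n - 1) * f \<rho>\<bar>) integrable_on {R2..R1}"
    by (intro integrable_continuous_interval continuous_intros f_cont)
  have "(\<lambda>\<rho>. f \<rho> * \<rho> ^ (n - 1)) integrable_on {R2..r}"
    using r by (intro integrable_continuous_interval continuous_intros continuous_on_subset[OF f_cont]) auto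
  from integral_norm_bound_integral[OF this integrable_on_subinterval[OF fw_int]] r
  have "\<bar>G r\<bar> \<le> integral {R2..r} (\<lambda>\<rho>. \<bar>\<rho> ^ (n - 1) * f \<rho>\<bar>)"
    by (simp add: weighted_primitive_def abs_mult mult.commute)
  also have "\<dots> \<le> integral {R2..R1} (\<lambda>\<rho>. \<bar>\<rho> ^ (n - 1) * f \<rho>\<bar>)"
    using r by (intro integral_subset_le integrable_on_subinterval[OF fw_int] fw_int) auto
  also have "\<dots> < R2 ^ (n - 1) * sqrt (2*lam/3) ^ 3"
    using f_small lam by (simp add: powr_three_halves)
  also have "\<dots> \<le> r ^ (n - 1) * sqrt (2*lam/3) ^ 3"
    using r R lam by (intro mult_right_mono power_mono) auto
  finally have "\<bar>G r\<bar> < r ^ (n - 1) * sqrt (2*lam/3) ^ 3" .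
  then show ?thesis using r R by (simp add: weighted_primitive_eq_Ffun abs_mult)
qed

lemma continuous_on_Ffun: "continuous_on {R2..R1} F"
proof -
  have "continuous_on {R2..R1} (\<lambda>r. - (1 / r ^ (n - 1)) * G r)"
    using R by (auto intro!: continuous_intros continuous_on_weighted_primitive)
  then show ?thesis by (simp only: Ffun_weighted_primitive[abs_def])
qed

lemma Ffun_bounded: "\<exists>M. 0 \<le> M \<and> M < sqrt (2*lam/3) ^ 3 \<and> (\<forall>r\<in>{R2..R1}. \<bar>F r\<bar> \<le> M)"
proof -
  have "continuous_on {R2..R1} (\<lambda>r. \<bar>F r\<bar>)" by (intro continuous_intros continuous_on_Ffun)
  then obtain r0 where "r0 \<in> {R2..R1}" "\<forall>r\<in>{R2..R1}. \<bar>F r\<bar> \<le> \<bar>F r0\<bar>"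
    using continuous_attains_sup[of "{R2..R1}" "\<lambda>r. \<bar>F r\<bar>"] R by auto
  then show ?thesis using abs_Ffun_less by (intro exI[of _ "\<bar>F r0\<bar>"]) auto
qed

lemma continuous_on_z2_Ffun: "continuous_on {R2..R1} (\<lambda>r. z2 lam (F r))"
proof -
  obtain M where M: "0 \<le> M" "M < sqrt (2*lam/3) ^ 3" "\<forall>r\<in>{R2..R1}. \<bar>F r\<bar> \<le> M"
    using Ffun_bounded by blast
  then have "F ` {R2..R1} \<subseteq> {-M..M}" by (auto simp: abs_le_iff)
  then show ?thesis
    by (rule continuous_on_compose2[OF continuous_on_z2[OF lam M(1,2)] continuous_on_Ffun])
qed

lemma z2_Ffun: "r \<in> {R2..R1} \<Longrightarrow>
    - sqrt (2*lam/3) < z2 lam (F r) \<and> z2 lam (F r) < sqrt (2*lam/3) \<and> dHfun lam (z2 lam (F r)) = F r"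
  using z2_root[OF lam abs_Ffun_less] by blast

lemma z2_Ffun_critical: "r \<in> {R2..R1} \<Longrightarrow> r ^ (n - 1) * dHfun lam (z2 lam (F r)) + G r = 0"
  using z2_Ffun weighted_primitive_eq_Ffun by simp

text \<open>The Euler--Lagrange equation only says \<open>H'(p) = F\<close>; the Neumann condition \<open>p(R\<^sub>2) = 0\<close>
  and the bound \<open>|F| < s\<^sup>3 = |H'(\<plusminus>s)|\<close> keep \<open>p\<close> on the branch \<open>(-s, s)\<close>, \<open>s = \<surd>(2\<lambda>/3)\<close>,
  by the intermediate value theorem.\<close>
lemma critical_point_eq_z2_Ffun:
  assumes p: "continuous_on {R2..R1} p" and p0: "p R2 = 0" "p R1 = 0"
    and crit: "\<forall>r\<in>{R2<..<R1}. r ^ (n - 1) * dHfun lam (p r) + G r = 0"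
  shows "\<forall>r\<in>{R2..R1}. p r = z2 lam (F r)"
proof -
  let ?s = "sqrt (2*lam/3)"
  have s: "?s > 0" using lam by simp
  have dH_p: "dHfun lam (p r) = F r" if r: "r \<in> {R2..R1}" for r
  proof (cases "r = R2 \<or> r = R1")
    case True then show ?thesis using p0 Ffun_endpoints by (auto simp: dHfun_def)
  next
    case False
    then have "r \<in> {R2<..<R1}" using r by auto
    then have "r ^ (n - 1) * dHfun lam (p r) + G r = 0" using crit by blast
    then have "r ^ (n - 1) * (dHfun lam (p r) - F r) = 0"
      using weighted_primitive_eq_Ffun[OF r] by (simp add: algebra_simps)
    moreover have "r ^ (n - 1) \<noteq> 0" using r R by auto
    ultimately show ?thesis by (metis eq_iff_diff_eq_0 mult_eq_0_iff)
  qed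
  have p_small: "\<bar>p r\<bar> < ?s" if r: "r \<in> {R2..R1}" for r
  proof (rule ccontr)
    assume "\<not> \<bar>p r\<bar> < ?s"
    moreover have "continuous_on {R2..r} (\<lambda>x. \<bar>p x\<bar>)"
      by (intro continuous_intros continuous_on_subset[OF p]) (use r in auto)
    ultimately obtain \<rho> where \<rho>: "R2 \<le> \<rho>" "\<rho> \<le> r" "\<bar>p \<rho>\<bar> = ?s"
      using IVT'[of "\<lambda>x. \<bar>p x\<bar>" R2 ?s r] p0 s r by auto
    then have "\<rho> \<in> {R2..R1}" using r by auto
    moreover have "p \<rho> = ?s \<or> p \<rho> = - ?s" using \<rho>(3) by (auto simp: abs_if split: if_splits)
    then have "\<bar>dHfun lam (p \<rho>)\<bar> = ?s ^ 3" using dHfun_sqrt[OF lam] s by auto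
    ultimately show False using dH_p abs_Ffun_less by fastforce
  qed
  show ?thesis
  proof
    fix r assume r: "r \<in> {R2..R1}"
    show "p r = z2 lam (F r)"
      using z2_eqI[OF lam _ _ dH_p[OF r]] p_small[OF r] by (simp add: abs_less_iff)
  qed
qed

lemma continuous_on_radial_lagrangian:
  "continuous_on {R2..R1} p \<Longrightarrow> continuous_on {R2..R1} (\<lambda>r. L r (p r))"
  unfolding radial_lagrangian_def Hfun_def
  by (intro continuous_intros continuous_on_weighted_primitive)

text \<open>Uniform in \<open>r\<close> because \<open>|z\<^sub>2(F)|\<close> stays away from \<open>\<surd>(2\<lambda>/3)\<close>, where \<open>H''\<close> vanishes.\<close>
lemma radial_lagrangian_local_max:
  "\<exists>e>0. \<forall>r\<in>{R2..R1}. \<forall>z. \<bar>z - z2 lam (F r)\<bar> < e \<longrightarrow> L r z \<le> L r (z2 lam (F r))"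
proof -
  have "continuous_on {R2..R1} (\<lambda>r. \<bar>z2 lam (F r)\<bar>)"
    by (intro continuous_intros continuous_on_z2_Ffun)
  then obtain r0 where r0: "r0 \<in> {R2..R1}" "\<forall>r\<in>{R2..R1}. \<bar>z2 lam (F r)\<bar> \<le> \<bar>z2 lam (F r0)\<bar>"
    using continuous_attains_sup[of "{R2..R1}" "\<lambda>r. \<bar>z2 lam (F r)\<bar>"] R by auto
  define b where "b = \<bar>z2 lam (F r0)\<bar>"
  have "b < sqrt (2*lam/3)" using z2_Ffun[OF r0(1)] by (auto simp: b_def)
  then have "b^2 < sqrt (2*lam/3) ^ 2" by (intro power_strict_mono) (auto simp: b_def)
  then have "3 * b^2 < 2 * lam" using lam by simp
  then obtain e where e: "e > 0"
    and rem: "\<And>w d. \<bar>w\<bar> \<le> b \<Longrightarrow> \<bar>d\<bar> < e \<Longrightarrow> (3*w^2/2 - lam)/2 + w*d/2 + d^2/8 \<le> 0"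
    using quartic_remainder_nonpos[of b lam] by (auto simp: b_def)
  show ?thesis
  proof (intro exI[of _ e] conjI e ballI allI impI)
    fix r z assume r: "r \<in> {R2..R1}" and z: "\<bar>z - z2 lam (F r)\<bar> < e"
    define w where "w = z2 lam (F r)"
    define d where "d = z - w"
    have "L r z - L r w = d^2 * (r ^ (n - 1) * (3*w^2/2 - lam)/2) + d^3 * (r ^ (n - 1) * w / 2)
        + d^4 * (r ^ (n - 1) / 8)"
      using radial_lagrangian_expansion[of lam f n R2 r w d] z2_Ffun_critical[OF r]
      by (simp add: d_def w_def)
    also have "\<dots> = r ^ (n - 1) * d^2 * ((3*w^2/2 - lam)/2 + w*d/2 + d^2/8)"
      by (simp add: field_simps power2_eq_square power3_eq_cube power4_eq_xxxx)
    also have "\<dots> \<le> 0"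
      using rem[of w d] r0 r R z by (intro mult_nonneg_nonpos) (auto simp: b_def w_def d_def)
    finally show "L r z \<le> L r (z2 lam (F r))" by (simp add: w_def)
  qed
qed

lemma radial_functional_perturbation:
  assumes p: "continuous_on {R2..R1} p" and \<psi>: "continuous_on {R2..R1} \<psi>"
  shows "J (\<lambda>r. p r + \<epsilon> * \<psi> r) - J p =
    \<epsilon> * integral {R2..R1} (\<lambda>r. (r ^ (n - 1) * dHfun lam (p r) + G r) * \<psi> r)
    + \<epsilon>^2 * integral {R2..R1} (\<lambda>r. r ^ (n - 1) * (3*(p r)^2/2 - lam)/2 * (\<psi> r)^2)
    + \<epsilon>^3 * integral {R2..R1} (\<lambda>r. r ^ (n - 1) * p r / 2 * (\<psi> r)^3)
    + \<epsilon>^4 * integral {R2..R1} (\<lambda>r. r ^ (n - 1) / 8 * (\<psi> r)^4)"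
proof -
  define A1 where "A1 = (\<lambda>r. (r ^ (n - 1) * dHfun lam (p r) + G r) * \<psi> r)"
  define A2 where "A2 = (\<lambda>r. r ^ (n - 1) * (3*(p r)^2/2 - lam)/2 * (\<psi> r)^2)"
  define A3 where "A3 = (\<lambda>r. r ^ (n - 1) * p r / 2 * (\<psi> r)^3)"
  define A4 where "A4 = (\<lambda>r::real. r ^ (n - 1) / 8 * (\<psi> r)^4)"
  have "A1 integrable_on {R2..R1}" "A2 integrable_on {R2..R1}"
       "A3 integrable_on {R2..R1}" "A4 integrable_on {R2..R1}"
    unfolding A1_def A2_def A3_def A4_def dHfun_def
    by (auto intro!: integrable_continuous_interval continuous_intros continuous_on_weighted_primitive p \<psi>)
  then have sum: "((\<lambda>r. \<epsilon> * A1 r + \<epsilon>^2 * A2 r + \<epsilon>^3 * A3 r + \<epsilon>^4 * A4 r) has_integral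
      \<epsilon> * integral {R2..R1} A1 + \<epsilon>^2 * integral {R2..R1} A2
      + \<epsilon>^3 * integral {R2..R1} A3 + \<epsilon>^4 * integral {R2..R1} A4) {R2..R1}"
    by (intro has_integral_add has_integral_mult_right integrable_integral)
  have "J (\<lambda>r. p r + \<epsilon> * \<psi> r) - J p = integral {R2..R1} (\<lambda>r. L r (p r + \<epsilon> * \<psi> r) - L r (p r))"
    unfolding radial_functional_def
    by (intro integral_diff[symmetric] integrable_continuous_interval continuous_on_radial_lagrangian
              continuous_intros p \<psi>)
  also have "\<dots> = integral {R2..R1} (\<lambda>r. \<epsilon> * A1 r + \<epsilon>^2 * A2 r + \<epsilon>^3 * A3 r + \<epsilon>^4 * A4 r)"
    unfolding radial_lagrangian_expansion A1_def A2_def A3_def A4_def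
    by (intro integral_cong) (simp add: power_mult_distrib algebra_simps)
  finally show ?thesis using integral_unique[OF sum] by (simp add: A1_def A2_def A3_def A4_def)
qed

lemma integral_by_parts_weighted_primitive:
  assumes C1: "C1_on_with R2 R1 v v'"
  shows "integral {R2..R1} (\<lambda>r. f r * r ^ (n - 1) * v r) = - integral {R2..R1} (\<lambda>r. G r * v' r)"
proof -
  have v: "continuous_on {R2..R1} v" by (rule C1_on_with_continuous_on[OF C1])
  have v': "continuous_on {R2..R1} v'" using C1 by (simp add: C1_on_with_def)
  have "((\<lambda>r. f r * r ^ (n - 1) * v r + G r * v' r) has_integral G R1 * v R1 - G R2 * v R2) {R2..R1}"
  proof (rule fundamental_theorem_of_calculus)
    show "R2 \<le> R1" using R by simp
    fix r assume r: "r \<in> {R2..R1}"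
    have "(v has_real_derivative v' r) (at r within {R2..R1})" using C1 r by (simp add: C1_on_with_def)
    from DERIV_mult[OF has_real_derivative_weighted_primitive[OF r] this]
    show "((\<lambda>r. G r * v r) has_vector_derivative f r * r ^ (n - 1) * v r + G r * v' r) (at r within {R2..R1})"
      by (simp add: has_real_derivative_iff_has_vector_derivative[symmetric] algebra_simps)
  qed
  then have "integral {R2..R1} (\<lambda>r. f r * r ^ (n - 1) * v r + G r * v' r) = 0"
    by (simp add: weighted_primitive_endpoints integral_unique)
  moreover have "(\<lambda>r. f r * r ^ (n - 1) * v r) integrable_on {R2..R1}"
    "(\<lambda>r. G r * v' r) integrable_on {R2..R1}"
    by (auto intro!: integrable_continuous_interval continuous_intros v v' f_cont
                     continuous_on_weighted_primitive)
  ultimately show ?thesis by (simp add: integral_add)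
qed

lemma Ifun_radial:
  fixes u :: "real^'n \<Rightarrow> real"
  assumes n: "n = CARD('n)" and C1: "C1_on_with R2 R1 v v'"
    and u: "\<forall>y\<in>cl_annulus R2 R1. u y = v (norm y)"
  shows "Ifun lam R2 R1 f u = real n * unit_ball_vol n * J v'"
proof -
  have v: "continuous_on {R2..R1} v" by (rule C1_on_with_continuous_on[OF C1])
  have v': "continuous_on {R2..R1} v'" using C1 by (simp add: C1_on_with_def)
  define h where "h = (\<lambda>r. Hfun lam (v' r) - f r * v r)"
  have "Ifun lam R2 R1 f u = integral (annulus R2 R1 :: (real^'n) set) (\<lambda>x. h (norm x))"
    unfolding Ifun_def
  proof (rule integral_cong)
    fix x :: "real^'n" assume "x \<in> annulus R2 R1"
    then have x: "x \<in> cl_annulus R2 R1" by (auto simp: annulus_def cl_annulus_def)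
    show "Hfun lam (norm (grad R2 R1 u x)) - f (norm x) * u x = h (norm x)"
      using norm_grad_radial[OF R C1 u x] u x by (simp add: h_def Hfun_def)
  qed
  also have "\<dots> = real n * unit_ball_vol n * integral {R2..R1} (\<lambda>r. r ^ (n - 1) * h r)"
    unfolding n by (rule integral_annulus_radial[OF R]) (auto simp: h_def Hfun_def intro!: continuous_intros v v' f_cont)
  also have "integral {R2..R1} (\<lambda>r. r ^ (n - 1) * h r)
      = integral {R2..R1} (\<lambda>r. r ^ (n - 1) * Hfun lam (v' r)) - integral {R2..R1} (\<lambda>r. f r * r ^ (n - 1) * v r)"
    unfolding h_def
    by (subst integral_diff[symmetric])
       (auto simp: Hfun_def algebra_simps intro!: integrable_continuous_interval continuous_intros v v' f_cont)
  also have "\<dots> = integral {R2..R1} (\<lambda>r. r ^ (n - 1) * Hfun lam (v' r)) + integral {R2..R1} (\<lambda>r. G r * v' r)"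
    using integral_by_parts_weighted_primitive[OF C1] by linarith
  also have "\<dots> = J v'"
    unfolding radial_functional_def radial_lagrangian_def
    by (subst integral_add[symmetric])
       (auto simp: Hfun_def intro!: integrable_continuous_interval continuous_intros v' continuous_on_weighted_primitive)
  finally show ?thesis .
qed

lemma radial_functional_local_extremum:
  fixes u :: "real^'n \<Rightarrow> real" and \<sigma> :: real
  assumes n: "n = CARD('n)" and C1: "C1_on_with R2 R1 v v'" and v'0: "v' R1 = 0" "v' R2 = 0"
    and u: "\<forall>y\<in>cl_annulus R2 R1. u y = v (norm y)"
    and \<psi>: "continuous_on {R2..R1} \<psi>" and \<psi>0: "\<psi> R1 = 0" "\<psi> R2 = 0"
    and "e > 0"
    and loc: "\<forall>w\<in>Uspace R2 R1. normU R2 R1 (\<lambda>x. w x - u x) < e \<longrightarrow>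
                 \<sigma> * Ifun lam R2 R1 f w \<le> \<sigma> * Ifun lam R2 R1 f u"
  shows "\<exists>e'>0. \<forall>\<epsilon>. \<bar>\<epsilon>\<bar> < e' \<longrightarrow> \<sigma> * (J (\<lambda>r. v' r + \<epsilon> * \<psi> r) - J v') \<le> 0"
proof -
  obtain M where M: "0 \<le> M" and perturb: "\<And>\<epsilon>. \<exists>w vw. w \<in> Uspace R2 R1
      \<and> C1_on_with R2 R1 vw (\<lambda>r. v' r + \<epsilon> * \<psi> r) \<and> (\<forall>y\<in>cl_annulus R2 R1. w y = vw (norm y))
      \<and> normU R2 R1 (\<lambda>x. w x - u x) \<le> \<bar>\<epsilon>\<bar> * M"
    using radial_perturbation[OF R C1 v'0 u \<psi> \<psi>0] by blast
  define K where "K = real n * unit_ball_vol n"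
  have K: "K > 0" unfolding K_def n by simp
  define e' where "e' = e / (M + 1)"
  have "e' > 0" unfolding e'_def using \<open>e > 0\<close> M by simp
  moreover have "\<sigma> * (J (\<lambda>r. v' r + \<epsilon> * \<psi> r) - J v') \<le> 0" if \<epsilon>: "\<bar>\<epsilon>\<bar> < e'" for \<epsilon>
  proof -
    obtain w vw where w: "w \<in> Uspace R2 R1" and C1_w: "C1_on_with R2 R1 vw (\<lambda>r. v' r + \<epsilon> * \<psi> r)"
      and w_eq: "\<forall>y\<in>cl_annulus R2 R1. w y = vw (norm y)"
      and w_near: "normU R2 R1 (\<lambda>x. w x - u x) \<le> \<bar>\<epsilon>\<bar> * M"
      using perturb by blast
    have "\<bar>\<epsilon>\<bar> * M \<le> \<bar>\<epsilon>\<bar> * (M + 1)" by (intro mult_left_mono) auto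
    also have "\<dots> < e' * (M + 1)" using \<epsilon> M by (intro mult_strict_right_mono) auto
    also have "\<dots> = e" unfolding e'_def using M by simp
    finally have "\<sigma> * Ifun lam R2 R1 f w \<le> \<sigma> * Ifun lam R2 R1 f u" using loc w w_near by force
    then have "K * (\<sigma> * (J (\<lambda>r. v' r + \<epsilon> * \<psi> r) - J v')) \<le> 0"
      unfolding Ifun_radial[OF n C1_w w_eq] Ifun_radial[OF n C1 u] K_def by (simp add: algebra_simps)
    then show ?thesis using K by (simp add: mult_le_0_iff)
  qed
  ultimately show ?thesis by blast
qed

text \<open>Testing with \<open>\<psi> = q (r - R\<^sub>2)(R\<^sub>1 - r)\<close>, where \<open>q\<close> is the Euler--Lagrange expression, makes the
  vanishing first variation read \<open>\<integral> q\<^sup>2 (r - R\<^sub>2)(R\<^sub>1 - r) = 0\<close>.\<close>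
lemma local_extremum_deriv_eq_z2:
  fixes u :: "real^'n \<Rightarrow> real" and \<sigma> :: real
  assumes n: "n = CARD('n)" and C1: "C1_on_with R2 R1 v v'" and v'0: "v' R1 = 0" "v' R2 = 0"
    and u: "\<forall>y\<in>cl_annulus R2 R1. u y = v (norm y)" and "e > 0" and "\<sigma> \<noteq> 0"
    and loc: "\<forall>w\<in>Uspace R2 R1. normU R2 R1 (\<lambda>x. w x - u x) < e \<longrightarrow>
                 \<sigma> * Ifun lam R2 R1 f w \<le> \<sigma> * Ifun lam R2 R1 f u"
  shows "\<forall>r\<in>{R2..R1}. v' r = z2 lam (F r)"
proof -
  have v': "continuous_on {R2..R1} v'" using C1 by (simp add: C1_on_with_def)
  define q where "q r = r ^ (n - 1) * dHfun lam (v' r) + G r" for r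
  have q: "continuous_on {R2..R1} q"
    unfolding q_def dHfun_def by (intro continuous_intros v' continuous_on_weighted_primitive)
  define \<psi> where "\<psi> r = q r * ((r - R2) * (R1 - r))" for r
  have \<psi>: "continuous_on {R2..R1} \<psi>" unfolding \<psi>_def by (intro continuous_intros q)
  obtain e' where "e' > 0" and e': "\<forall>\<epsilon>. \<bar>\<epsilon>\<bar> < e' \<longrightarrow> \<sigma> * (J (\<lambda>r. v' r + \<epsilon> * \<psi> r) - J v') \<le> 0"
    using radial_functional_local_extremum[OF n C1 v'0 u \<psi> _ _ \<open>e > 0\<close> loc] by (auto simp: \<psi>_def)
  have "\<sigma> * integral {R2..R1} (\<lambda>r. q r * \<psi> r) = 0"
  proof (rule quartic_nonpos_near_0_linear_coeff[OF \<open>e' > 0\<close>])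
    fix \<epsilon> :: real assume "\<bar>\<epsilon>\<bar> < e'"
    with e' show "\<epsilon> * (\<sigma> * integral {R2..R1} (\<lambda>r. q r * \<psi> r))
        + \<epsilon>^2 * (\<sigma> * integral {R2..R1} (\<lambda>r. r ^ (n - 1) * (3*(v' r)^2/2 - lam)/2 * (\<psi> r)^2))
        + \<epsilon>^3 * (\<sigma> * integral {R2..R1} (\<lambda>r. r ^ (n - 1) * v' r / 2 * (\<psi> r)^3))
        + \<epsilon>^4 * (\<sigma> * integral {R2..R1} (\<lambda>r. r ^ (n - 1) / 8 * (\<psi> r)^4)) \<le> 0"
      unfolding radial_functional_perturbation[OF v' \<psi>] by (simp add: q_def algebra_simps)
  qed
  then have "integral {R2..R1} (\<lambda>r. (q r)^2 * ((r - R2) * (R1 - r))) = 0"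
    using \<open>\<sigma> \<noteq> 0\<close> by (simp add: \<psi>_def power2_eq_square mult.assoc)
  then have "(q r)^2 * ((r - R2) * (R1 - r)) = 0" if "r \<in> {R2<..<R1}" for r
    using R that
    by (intro continuous_nonneg_integral_0_imp_0[of R2 R1 "\<lambda>r. (q r)^2 * ((r - R2) * (R1 - r))"])
       (auto intro!: continuous_intros q mult_nonneg_nonneg)
  then have "\<forall>r\<in>{R2<..<R1}. r ^ (n - 1) * dHfun lam (v' r) + G r = 0"
    by (auto simp: q_def)
  then show ?thesis by (rule critical_point_eq_z2_Ffun[OF v' v'0(2) v'0(1)])
qed

lemma second_variation_neg:
  assumes p: "continuous_on {R2..R1} p" and p_small: "\<forall>r\<in>{R2..R1}. \<bar>p r\<bar> < sqrt (2*lam/3)"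
  shows "integral {R2..R1} (\<lambda>r. r ^ (n - 1) * (3*(p r)^2/2 - lam)/2 * ((r - R2) * (R1 - r))^2) < 0"
proof -
  define g where "g r = r ^ (n - 1) * (3*(p r)^2/2 - lam)/2 * ((r - R2) * (R1 - r))^2" for r
  have coeff_neg: "3*(p r)^2/2 - lam < 0" and r_pos: "r ^ (n - 1) > 0" if r: "r \<in> {R2..R1}" for r
  proof -
    have "\<bar>p r\<bar>^2 < sqrt (2*lam/3) ^ 2" using p_small r by (intro power_strict_mono) auto
    then show "3*(p r)^2/2 - lam < 0" using lam by simp
    show "r ^ (n - 1) > 0" using r R by auto
  qed
  have g_nonpos: "g r \<le> 0" if "r \<in> {R2..R1}" for r
    unfolding g_def
    by (intro mult_nonpos_nonneg divide_nonpos_pos mult_nonneg_nonpos)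
       (use coeff_neg[OF that] r_pos[OF that] in auto)
  define m where "m = (R1 + R2) / 2"
  have m: "m \<in> {R2..R1}" using R by (simp add: m_def)
  have "((m - R2) * (R1 - m))^2 > 0" using R by (simp add: m_def)
  then have "g m < 0"
    unfolding g_def by (intro mult_neg_pos divide_neg_pos mult_pos_neg) (use coeff_neg[OF m] r_pos[OF m] in auto)
  have g: "continuous_on {R2..R1} g" unfolding g_def by (auto intro!: continuous_intros p)
  have "0 \<le> integral {R2..R1} (\<lambda>r. - g r)"
    using g_nonpos by (intro integral_nonneg integrable_neg integrable_continuous_interval g) auto
  moreover have "integral {R2..R1} (\<lambda>r. - g r) \<noteq> 0"
  proof
    assume "integral {R2..R1} (\<lambda>r. - g r) = 0"
    then have "- g m = 0"
      using R g_nonpos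
      by (intro continuous_nonneg_integral_0_imp_0[of R2 R1 "\<lambda>r. - g r", OF _ _ _ _ m])
         (auto intro!: continuous_intros g)
    with \<open>g m < 0\<close> show False by simp
  qed
  ultimately show ?thesis by (simp add: g_def integral_neg)
qed

lemma no_local_min_U:
  fixes u :: "real^'n \<Rightarrow> real"
  assumes n: "n = CARD('n)"
  shows "\<not> local_min_U lam R2 R1 f u"
proof
  assume "local_min_U lam R2 R1 f u"
  then obtain v v' e where C1: "C1_on_with R2 R1 v v'" and v'0: "v' R1 = 0" "v' R2 = 0"
    and u: "\<forall>y\<in>cl_annulus R2 R1. u y = v (norm y)" and "e > 0"
    and loc: "\<forall>w\<in>Uspace R2 R1. normU R2 R1 (\<lambda>x. w x - u x) < e \<longrightarrow>
                (-1) * Ifun lam R2 R1 f w \<le> (-1) * Ifun lam R2 R1 f u"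
    unfolding local_min_U_def Uspace_def by auto
  have v'_eq: "\<forall>r\<in>{R2..R1}. v' r = z2 lam (F r)"
    by (rule local_extremum_deriv_eq_z2[OF n C1 v'0 u \<open>e > 0\<close> _ loc]) simp
  have v': "continuous_on {R2..R1} v'" using C1 by (simp add: C1_on_with_def)
  define \<psi> where "\<psi> r = (r - R2) * (R1 - r)" for r
  have \<psi>: "continuous_on {R2..R1} \<psi>" unfolding \<psi>_def by (intro continuous_intros)
  obtain e' where "e' > 0" and e': "\<forall>\<epsilon>. \<bar>\<epsilon>\<bar> < e' \<longrightarrow> (-1) * (J (\<lambda>r. v' r + \<epsilon> * \<psi> r) - J v') \<le> 0"
    using radial_functional_local_extremum[OF n C1 v'0 u \<psi> _ _ \<open>e > 0\<close> loc] by (auto simp: \<psi>_def)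
  have "integral {R2..R1} (\<lambda>r. (r ^ (n - 1) * dHfun lam (v' r) + G r) * \<psi> r) = integral {R2..R1} (\<lambda>r. 0)"
    by (rule integral_cong) (use v'_eq z2_Ffun_critical in auto)
  then have first_variation: "integral {R2..R1} (\<lambda>r. (r ^ (n - 1) * dHfun lam (v' r) + G r) * \<psi> r) = 0"
    by simp
  have "0 \<le> integral {R2..R1} (\<lambda>r. r ^ (n - 1) * (3*(v' r)^2/2 - lam)/2 * (\<psi> r)^2)"
  proof (rule quartic_nonneg_near_0_quadratic_coeff[OF \<open>e' > 0\<close>])
    fix \<epsilon> :: real assume "\<bar>\<epsilon>\<bar> < e'"
    with e' have "(-1) * (J (\<lambda>r. v' r + \<epsilon> * \<psi> r) - J v') \<le> 0" by blast
    then show "0 \<le> \<epsilon>^2 * integral {R2..R1} (\<lambda>r. r ^ (n - 1) * (3*(v' r)^2/2 - lam)/2 * (\<psi> r)^2)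
        + \<epsilon>^3 * integral {R2..R1} (\<lambda>r. r ^ (n - 1) * v' r / 2 * (\<psi> r)^3)
        + \<epsilon>^4 * integral {R2..R1} (\<lambda>r. r ^ (n - 1) / 8 * (\<psi> r)^4)"
      unfolding radial_functional_perturbation[OF v' \<psi>] first_variation mult_zero_right add_0_left
        mult_minus1 by linarith
  qed
  moreover have "\<forall>r\<in>{R2..R1}. \<bar>v' r\<bar> < sqrt (2*lam/3)"
  proof
    fix r assume r: "r \<in> {R2..R1}"
    show "\<bar>v' r\<bar> < sqrt (2*lam/3)" using v'_eq z2_Ffun[OF r] r by (auto simp: abs_less_iff)
  qed
  ultimately show False using second_variation_neg[OF v'] by (simp add: \<psi>_def)
qed

lemma local_max_U_imp_profile:
  fixes u :: "real^'n \<Rightarrow> real"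
  assumes n: "n = CARD('n)" and "local_max_U lam R2 R1 f u"
  shows "\<exists>u0. \<forall>x\<in>cl_annulus R2 R1. u x = u0 + integral {R2..norm x} (\<lambda>\<rho>. z2 lam (F \<rho>))"
proof -
  obtain v v' e where C1: "C1_on_with R2 R1 v v'" and v'0: "v' R1 = 0" "v' R2 = 0"
    and u: "\<forall>y\<in>cl_annulus R2 R1. u y = v (norm y)" and "e > 0"
    and loc: "\<forall>w\<in>Uspace R2 R1. normU R2 R1 (\<lambda>x. w x - u x) < e \<longrightarrow>
                1 * Ifun lam R2 R1 f w \<le> 1 * Ifun lam R2 R1 f u"
    using assms(2) unfolding local_max_U_def Uspace_def by auto
  have "\<forall>r\<in>{R2..R1}. v' r = z2 lam (F r)"
    by (rule local_extremum_deriv_eq_z2[OF n C1 v'0 u \<open>e > 0\<close> _ loc]) simp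
  then have "\<forall>x\<in>cl_annulus R2 R1. u x = v R2 + integral {R2..norm x} (\<lambda>\<rho>. z2 lam (F \<rho>))"
    by (rule radial_eq_integral_deriv[OF C1 _ u])
  then show ?thesis by blast
qed

lemma profile_imp_local_max_U:
  fixes u :: "real^'n \<Rightarrow> real"
  assumes n: "n = CARD('n)" and "u \<in> Uspace R2 R1"
    and u_eq: "\<forall>x\<in>cl_annulus R2 R1. u x = u0 + integral {R2..norm x} (\<lambda>\<rho>. z2 lam (F \<rho>))"
  shows "local_max_U lam R2 R1 f u"
proof -
  obtain v v' where C1: "C1_on_with R2 R1 v v'"
    and u: "\<forall>y\<in>cl_annulus R2 R1. u y = v (norm y)"
    using assms(2) unfolding Uspace_def by blast
  have v'_eq: "\<forall>r\<in>{R2..R1}. v' r = z2 lam (F r)"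
    by (rule deriv_eq_of_radial_eq_integral[OF R C1 u continuous_on_z2_Ffun u_eq])
  obtain e where "e > 0" and L_max: "\<forall>r\<in>{R2..R1}. \<forall>z. \<bar>z - z2 lam (F r)\<bar> < e \<longrightarrow> L r z \<le> L r (z2 lam (F r))"
    using radial_lagrangian_local_max by blast
  have v': "continuous_on {R2..R1} v'" using C1 by (simp add: C1_on_with_def)
  have K: "real n * unit_ball_vol n > 0" unfolding n by simp
  show ?thesis unfolding local_max_U_def
  proof (intro conjI assms(2) exI[of _ e] \<open>e > 0\<close> ballI impI)
    fix w assume "w \<in> Uspace R2 R1" and w_near: "normU R2 R1 (\<lambda>x. w x - u x) < e"
    then obtain vw vw' where C1_w: "C1_on_with R2 R1 vw vw'"
      and w: "\<forall>y\<in>cl_annulus R2 R1. w y = vw (norm y)"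
      unfolding Uspace_def by blast
    have vw': "continuous_on {R2..R1} vw'" using C1_w by (simp add: C1_on_with_def)
    have "L r (vw' r) \<le> L r (v' r)" if r: "r \<in> {R2..R1}" for r
    proof -
      have "\<bar>vw' r - v' r\<bar> \<le> normU R2 R1 (\<lambda>x. w x - u x)"
        using w u by (intro abs_deriv_le_normU[OF R C1_on_with_diff[OF C1 C1_w] _ r]) simp
      then show ?thesis using L_max r w_near v'_eq by simp
    qed
    then have "J vw' \<le> J v'"
      unfolding radial_functional_def
      by (intro integral_le integrable_continuous_interval continuous_on_radial_lagrangian vw' v')
    then show "Ifun lam R2 R1 f w \<le> Ifun lam R2 R1 f u"
      unfolding Ifun_radial[OF n C1_w w] Ifun_radial[OF n C1 u] using K by (intro mult_left_mono) auto
  qed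
qed

end

theorem mainTheorem7:
  fixes R1 R2 lam :: real and f :: "real \<Rightarrow> real"
  assumes "R1 > R2" and "R2 > 0" and "lam > 0"
    and "continuous_on {R2..R1} f"
    and "integral {R2..R1} (\<lambda>r. r ^ (CARD('n) - 1) * f r) = 0"
    and "\<exists>R3. R2 < R3 \<and> R3 < R1 \<and> f R3 = 0 \<and> (\<forall>r\<in>{R2..R1}. r \<noteq> R3 \<longrightarrow> f r \<noteq> 0)"
    and "integral {R2..R1} (\<lambda>r. \<bar>r ^ (CARD('n) - 1) * f r\<bar>)
           < R2 ^ (CARD('n) - 1) * (2 * lam / 3) powr (3/2)"
  shows "(\<nexists>u::(real^'n) \<Rightarrow> real. local_min_U lam R2 R1 f u) \<and>
         (\<forall>ub::(real^'n) \<Rightarrow> real. ub \<in> Uspace R2 R1 \<longrightarrow>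
            (local_max_U lam R2 R1 f ub \<longleftrightarrow>
             (\<exists>u0. \<forall>x\<in>cl_annulus R2 R1.
                ub x = u0 + integral {R2..norm x} (\<lambda>\<rho>. z2 lam (Ffun CARD('n) R2 f \<rho>)))))"
proof -
  define n where "n = CARD('n)"
  interpret radial_problem R1 R2 lam f n
    by unfold_locales (use assms in \<open>auto simp: n_def\<close>)
  show ?thesis
    unfolding n_def[symmetric]
    using no_local_min_U[OF n_def] local_max_U_imp_profile[OF n_def] profile_imp_local_max_U[OF n_def]
    by blast
qed
end
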